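(* Let $d\in\mathbb N$, $B\in\mathbb N$, $\alpha>0$, $\Delta t>0$ and $\gamma\in(0,1)$ be fixed, and consider the sparse load-balancing queueing model described in the context. Let $(G_n,\mathbf z_n)_{n\in\mathbb N}$ be a sequence of (possibly random) finite graphs with maximal degree at most $d$ together with initial queue states, converging in probability in the local weak sense to a (possibly infinite, possibly random) rooted marked graph $(G,\mathbf z)$. Then for any policy $\pi$, $$\lim_{n\to\infty} J^{G_n,\mathbf z_n}(\pi) = J^{G,\mathbf z}(\pi).$$
   Context: Queueing model. A system is given by an undirected graph $G=(\mathcal N,\mathcal E)$ of maximal degree at most $d$ (every node has at least one neighbour); each node $i\in\mathcal N$ is an agent (scheduler) owning one FIFO queue with buffer capacity $B$, so the local state is $z_i\in\mathcal Z:=\{0,1,\dots,B\}$. Let $N_i=\{j:(i,j)\in\mathcal E\}$ denote the neighbours of $i$. Time is divided into decision epochs $t=0,1,2,\dots$ of length $\Delta t$. A shared per-agent arrival rate $\lambda(t)>0$ evolves as a finite-state Markov chain (Markov-modulated Poisson arrivals, e.g. switching between two positive rates $\lambda_h,\lambda_l$), common to all agents. A policy is a sequence $\pi=(\pi_t)_{t\ge0}$ of decision rules $\pi_t:\mathcal Z\to[0,1]$. At the start of epoch $t$, each agent $i$ independently samples an action $a_i(t)\in\{0,1\}$ with $\mathbb P(a_i(t)=1)=\pi_t(z_i(t))$; action $0$ means all jobs arriving at agent $i$ during the epoch are sent to its own queue, action $1$ means each such job is sent to a uniformly random neighbour's queue. Consequently, during epoch $t$ queue $i$ evolves (independently across queues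 given the actions and $\lambda(t)$) as a continuous-time birth–death chain on $\mathcal Z$ for time $\Delta t$, with arrival rate $\lambda^i_t=\lambda(t)\big(1-a_i(t)+\sum_{j\in N_i} a_j(t)/|N_j|\big)$ (transition $z\to z+1$ for $z<B$) and service rate $\alpha$ (transition $z\to z-1$ for $z>0$); an arrival finding the queue in state $B$ is dropped. Let $D_i(t)$ be the expected number of dropped jobs at queue $i$ during epoch $t$ given the states and actions at the start of the epoch. Objectives. For a finite graph $G_n$ with initial states $\mathbf z_n$, let $D^N(t)=\frac1{|G_n|}\sum_{i\in G_n}D_i(t)$ and $J^{G_n,\mathbf z_n}(\pi)=-\mathbb E\big[\sum_{t=0}^\infty\gamma^t D^N(t)\big]$. For the limiting rooted marked graph $(G,\varnothing,\mathbf z)$ run under the same dynamics, let $D(t)=D_\varnothing(t)$ be the expected drops at the root node and $J^{G,\mathbf z}(\pi)=-\mathbb E\big[\sum_{t=0}^\infty\gamma^tD(t)\big]$. Local weak convergence. $\mathcal G_*$ is the space of marked rooted graphs $(G,\varnothing,\mathbf z)$ (graph, root node, marks $\mathbf z\in\mathcal Z^{\mathcal N}$). Let $B_k(G,\varnothing,\mathbf z)$ be the marked rooted subgraph induced by the $k$-hop neighbourhood of the root. $(G_n,\varnothing_n,\mathbf z_n)\to(G,\varnothing,\mathbf z)$ in $\mathcal G_*$ if for every $k$ there is $n'$ such that for all $n>n'$ there is a mark-preserving rooted isomorphism $B_k(G_n,\varnothing_n,\mathbf z_n)\to B_k(G,\varnothing,\mathbf z)$. A sequence of finite marked graphs $(G_n,\mathbf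 z_n)$ converges in probability in the local weak sense to $(G,\mathbf z)$ if $\frac1{|G_n|}\sum_{i\in G_n}f(C_i(G_n))\to\mathbb E[f(G,\varnothing,\mathbf z)]$ in probability for every bounded continuous $f:\mathcal G_*\to\mathbb R$, where $C_i(G_n)$ is the connected component of $i$ in $G_n$ rooted at $i$ with marks $\mathbf z_n$. *)

theory Defs
  imports "HOL-Probability.Probability"
begin

text \<open>A graph is a vertex set of naturals with an adjacency relation; a marked graph
additionally carries queue states (marks); a rooted marked graph additionally a root.\<close>

type_synonym graph = "nat set \<times> (nat \<Rightarrow> nat \<Rightarrow> bool)"
type_synonym mgraph = "graph \<times> (nat \<Rightarrow> nat)"
type_synonym rgraph = "mgraph \<times> nat"

definition verts :: "graph \<Rightarrow> nat set" where "verts G = fst G"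
definition adj :: "graph \<Rightarrow> nat \<Rightarrow> nat \<Rightarrow> bool" where "adj G = snd G"
definition nbrs :: "graph \<Rightarrow> nat \<Rightarrow> nat set" where
  "nbrs G i = {j \<in> verts G. adj G i j}"

definition wf_graph :: "graph \<Rightarrow> bool" where
  "wf_graph G \<longleftrightarrow> (\<forall>i j. adj G i j \<longrightarrow> i \<in> verts G \<and> j \<in> verts G \<and> adj G j i \<and> i \<noteq> j)"

definition max_deg_le :: "nat \<Rightarrow> graph \<Rightarrow> bool" where
  "max_deg_le d G \<longleftrightarrow> (\<forall>i\<in>verts G. finite (nbrs G i) \<and> card (nbrs G i) \<le> d)"

definition no_isolated :: "graph \<Rightarrow> bool" where
  "no_isolated G \<longleftrightarrow> (\<forall>i\<in>verts G. nbrs G i \<noteq> {})"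

definition marks_ok :: "nat \<Rightarrow> mgraph \<Rightarrow> bool" where
  "marks_ok B g \<longleftrightarrow> (\<forall>i\<in>verts (fst g). snd g i \<le> B)"

fun ballset :: "graph \<Rightarrow> nat \<Rightarrow> nat \<Rightarrow> nat set" where
  "ballset G 0 r = {r}"
| "ballset G (Suc k) r = ballset G k r \<union> {l. \<exists>j\<in>ballset G k r. adj G j l}"

definition induced :: "graph \<Rightarrow> nat set \<Rightarrow> graph" where
  "induced G S = (verts G \<inter> S, \<lambda>i j. adj G i j \<and> i \<in> S \<and> j \<in> S)"

definition ball :: "nat \<Rightarrow> rgraph \<Rightarrow> rgraph" where
  "ball k g = ((induced (fst (fst g)) (ballset (fst (fst g)) k (snd g)), snd (fst g)), snd g)"

definition comp_set :: "graph \<Rightarrow> nat \<Rightarrow> nat set" where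
  "comp_set G r = (\<Union>k. ballset G k r)"

definition component :: "mgraph \<Rightarrow> nat \<Rightarrow> rgraph" where
  "component g i = ((induced (fst g) (comp_set (fst g) i), snd g), i)"

definition rg_iso :: "rgraph \<Rightarrow> rgraph \<Rightarrow> bool" where
  "rg_iso g h \<longleftrightarrow> (\<exists>\<phi>. bij_betw \<phi> (verts (fst (fst g))) (verts (fst (fst h))) \<and>
      \<phi> (snd g) = snd h \<and>
      (\<forall>i\<in>verts (fst (fst g)). \<forall>j\<in>verts (fst (fst g)).
          adj (fst (fst g)) i j \<longleftrightarrow> adj (fst (fst h)) (\<phi> i) (\<phi> j)) \<and>
      (\<forall>i\<in>verts (fst (fst g)). snd (fst g) i = snd (fst h) (\<phi> i)))"

definition in_Gstar :: "nat \<Rightarrow> rgraph \<Rightarrow> bool" where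
  "in_Gstar B g \<longleftrightarrow> wf_graph (fst (fst g)) \<and> snd g \<in> verts (fst (fst g)) \<and>
     (\<forall>i\<in>verts (fst (fst g)). finite (nbrs (fst (fst g)) i)) \<and>
     verts (fst (fst g)) = comp_set (fst (fst g)) (snd g) \<and> marks_ok B (fst g)"

definition Gstar :: "nat \<Rightarrow> rgraph set" where
  "Gstar B = {g. in_Gstar B g}"

definition lw_converges :: "(nat \<Rightarrow> rgraph) \<Rightarrow> rgraph \<Rightarrow> bool" where
  "lw_converges seq g \<longleftrightarrow> (\<forall>k. \<exists>n'. \<forall>n>n'. rg_iso (ball k (seq n)) (ball k g))"

text \<open>Bounded continuous functions on G_* (G_* is metrizable, so sequential continuity
is continuity; continuity forces invariance under rooted isomorphism).\<close>
definition lw_bcont :: "nat \<Rightarrow> (rgraph \<Rightarrow> real) \<Rightarrow> bool" where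
  "lw_bcont B f \<longleftrightarrow> (\<exists>C. \<forall>g. in_Gstar B g \<longrightarrow> \<bar>f g\<bar> \<le> C) \<and>
     (\<forall>seq g. (\<forall>n. in_Gstar B (seq n)) \<longrightarrow> in_Gstar B g \<longrightarrow> lw_converges seq g \<longrightarrow>
         (\<lambda>n. f (seq n)) \<longlonglongrightarrow> f g)"

text \<open>Borel sigma-algebra of G_*: generated by the cylinder events on balls.\<close>
definition lw_sets :: "nat \<Rightarrow> rgraph set set" where
  "lw_sets B = sigma_sets (Gstar B) {{g \<in> Gstar B. rg_iso (ball k g) H} | k H. True}"

definition lw_avg :: "(rgraph \<Rightarrow> real) \<Rightarrow> mgraph \<Rightarrow> real" where
  "lw_avg f g = (\<Sum>i\<in>verts (fst g). f (component g i)) / real (card (verts (fst g)))"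

definition lw_conv_prob :: "nat \<Rightarrow> (nat \<Rightarrow> mgraph pmf) \<Rightarrow> rgraph measure \<Rightarrow> bool" where
  "lw_conv_prob B Gn Glim \<longleftrightarrow> (\<forall>f. lw_bcont B f \<longrightarrow> (\<forall>\<epsilon>>0.
     (\<lambda>n. measure_pmf.prob (Gn n) {g. \<epsilon> < \<bar>lw_avg f g - integral\<^sup>L Glim f\<bar>}) \<longlonglongrightarrow> 0))"

definition qgen :: "nat \<Rightarrow> real \<Rightarrow> real \<Rightarrow> nat \<Rightarrow> nat \<Rightarrow> real" where
  "qgen B r al x y =
     (if x < B \<and> y = Suc x then r
      else if 0 < x \<and> Suc y = x then al
      else if y = x then - ((if x < B then r else 0) + (if 0 < x then al else 0))
      else 0)"

fun qpow :: "nat \<Rightarrow> real \<Rightarrow> real \<Rightarrow> nat \<Rightarrow> nat \<Rightarrow> nat \<Rightarrow> real" where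
  "qpow B r al 0 x y = (if x = y then 1 else 0)"
| "qpow B r al (Suc k) x y = (\<Sum>w\<le>B. qpow B r al k x w * qgen B r al w y)"

definition bd_trans :: "nat \<Rightarrow> real \<Rightarrow> real \<Rightarrow> real \<Rightarrow> nat \<Rightarrow> nat \<Rightarrow> real" where
  "bd_trans B r al s x y = (\<Sum>k. s ^ k / fact k * qpow B r al k x y)"

definition bd_pmf :: "nat \<Rightarrow> real \<Rightarrow> real \<Rightarrow> real \<Rightarrow> nat \<Rightarrow> nat pmf" where
  "bd_pmf B r al dt x = embed_pmf (\<lambda>y. if y \<le> B then bd_trans B r al dt x y else 0)"

text \<open>Expected number of dropped jobs during an epoch of length dt, starting in x:
arrival rate times expected time spent in the full state B.\<close>
definition drops :: "nat \<Rightarrow> real \<Rightarrow> real \<Rightarrow> real \<Rightarrow> nat \<Rightarrow> real" where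
  "drops B r al dt x = r * integral {0..dt} (\<lambda>s. bd_trans B r al s x B)"

definition arr_rate :: "real \<Rightarrow> graph \<Rightarrow> (nat \<Rightarrow> bool) \<Rightarrow> nat \<Rightarrow> real" where
  "arr_rate l G a i = l * ((1 - of_bool (a i)) +
      (\<Sum>j\<in>nbrs G i. of_bool (a j) / real (card (nbrs G j))))"

definition actions :: "(nat \<Rightarrow> nat \<Rightarrow> real) \<Rightarrow> graph \<Rightarrow> nat \<Rightarrow> (nat \<Rightarrow> nat) \<Rightarrow> (nat \<Rightarrow> bool) measure" where
  "actions pol G t z = PiM (verts G) (\<lambda>i. measure_pmf (bernoulli_pmf (pol t (z i))))"

definition stM :: "graph \<Rightarrow> ('s \<times> (nat \<Rightarrow> nat)) measure" where
  "stM G = count_space UNIV \<Otimes>\<^sub>M PiM (verts G) (\<lambda>_. count_space UNIV)"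

definition epoch_step ::
  "nat \<Rightarrow> real \<Rightarrow> real \<Rightarrow> ('s \<Rightarrow> real) \<Rightarrow> ('s \<Rightarrow> 's pmf) \<Rightarrow> (nat \<Rightarrow> nat \<Rightarrow> real) \<Rightarrow>
   graph \<Rightarrow> nat \<Rightarrow> 's \<times> (nat \<Rightarrow> nat) \<Rightarrow> ('s \<times> (nat \<Rightarrow> nat)) measure" where
  "epoch_step B al dt lam P pol G t sz =
     bind (actions pol G t (snd sz)) (\<lambda>a.
     bind (PiM (verts G) (\<lambda>i. measure_pmf (bd_pmf B (arr_rate (lam (fst sz)) G a i) al dt (snd sz i))))
       (\<lambda>z'. distr (measure_pmf (P (fst sz))) (stM G) (\<lambda>s'. (s', z'))))"

text \<open>Joint law of (arrival-rate state, queue states) at the start of epoch t.\<close>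
primrec state_dist ::
  "nat \<Rightarrow> real \<Rightarrow> real \<Rightarrow> ('s \<Rightarrow> real) \<Rightarrow> ('s \<Rightarrow> 's pmf) \<Rightarrow> 's pmf \<Rightarrow> (nat \<Rightarrow> nat \<Rightarrow> real) \<Rightarrow>
   mgraph \<Rightarrow> nat \<Rightarrow> ('s \<times> (nat \<Rightarrow> nat)) measure" where
  "state_dist B al dt lam P l0 pol g 0 =
     distr (measure_pmf l0) (stM (fst g)) (\<lambda>s. (s, restrict (snd g) (verts (fst g))))"
| "state_dist B al dt lam P l0 pol g (Suc t) =
     bind (state_dist B al dt lam P l0 pol g t) (epoch_step B al dt lam P pol (fst g) t)"

definition exp_drops ::
  "nat \<Rightarrow> real \<Rightarrow> real \<Rightarrow> ('s \<Rightarrow> real) \<Rightarrow> ('s \<Rightarrow> 's pmf) \<Rightarrow> 's pmf \<Rightarrow> (nat \<Rightarrow> nat \<Rightarrow> real) \<Rightarrow>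
   mgraph \<Rightarrow> nat \<Rightarrow> nat \<Rightarrow> real" where
  "exp_drops B al dt lam P l0 pol g i t =
     (\<integral>sz. (\<integral>a. drops B (arr_rate (lam (fst sz)) (fst g) a i) al dt (snd sz i)
               \<partial>actions pol (fst g) t (snd sz))
        \<partial>state_dist B al dt lam P l0 pol g t)"

definition J_fin ::
  "nat \<Rightarrow> real \<Rightarrow> real \<Rightarrow> real \<Rightarrow> ('s \<Rightarrow> real) \<Rightarrow> ('s \<Rightarrow> 's pmf) \<Rightarrow> 's pmf \<Rightarrow>
   (nat \<Rightarrow> nat \<Rightarrow> real) \<Rightarrow> mgraph pmf \<Rightarrow> real" where
  "J_fin B al dt \<gamma> lam P l0 pol Gn = - (\<integral>g. (\<Sum>t. \<gamma> ^ t *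
      ((\<Sum>i\<in>verts (fst g). exp_drops B al dt lam P l0 pol g i t) / real (card (verts (fst g)))))
      \<partial>measure_pmf Gn)"

definition J_lim ::
  "nat \<Rightarrow> real \<Rightarrow> real \<Rightarrow> real \<Rightarrow> ('s \<Rightarrow> real) \<Rightarrow> ('s \<Rightarrow> 's pmf) \<Rightarrow> 's pmf \<Rightarrow>
   (nat \<Rightarrow> nat \<Rightarrow> real) \<Rightarrow> rgraph measure \<Rightarrow> real" where
  "J_lim B al dt \<gamma> lam P l0 pol Glim = - (\<integral>g. (\<Sum>t. \<gamma> ^ t *
      exp_drops B al dt lam P l0 pol (fst g) (snd g) t) \<partial>Glim)"

end

(*
  A queue's evolution during an epoch only reads the actions of its closed neighbourhood, and
  actions are drawn independently at the nodes. Hence the law of the state restricted to a finite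
  set S at epoch t + 1 is obtained from its law on the neighbourhood of S at epoch t by a local
  kernel, and the expected drops at a node during epoch t only depend on its (t + 2)-ball (marks up
  to distance t + 1, and degrees up to distance t + 1, which enter the arrival rates).

  So the discounted cost at the root, capped at root degree d, is a bounded function on G_* that is
  locally constant, hence bounded and continuous for the local weak topology. The finite objective
  is minus the expectation of the empirical average of this function over the roots of G_n, the
  limit objective minus its integral, and convergence in probability of uniformly bounded averages
  gives convergence of their expectations. The cap is harmless: applying local weak convergence to
  the indicator of root degree > d shows that the limit has root degree at most d almost surely.
*)

theory Submission
  imports Defs
begin

lemma measurable_PiM_pmf_kernel:
  fixes K :: "'x \<Rightarrow> 'i \<Rightarrow> 'b pmf"
  assumes K: "\<And>i. i \<in> I \<Longrightarrow> (\<lambda>x. measure_pmf (K x i)) \<in> M \<rightarrow>\<^sub>M subprob_algebra (count_space UNIV)"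
  shows "(\<lambda>x. PiM I (\<lambda>i. measure_pmf (K x i))) \<in> M \<rightarrow>\<^sub>M subprob_algebra (PiM I (\<lambda>_. count_space UNIV))"
proof (rule measurable_subprob_algebra_generated[OF sets_PiM Int_stable_prod_algebra prod_algebra_sets_into_space])
  fix a assume "a \<in> space M"
  show "subprob_space (PiM I (\<lambda>i. measure_pmf (K a i)))"
    by (intro prob_space_imp_subprob_space prob_space_PiM) (simp add: prob_space_measure_pmf)
  show "sets (PiM I (\<lambda>i. measure_pmf (K a i))) = sets (PiM I (\<lambda>_. count_space UNIV))"
    by (intro sets_PiM_cong) auto
next
  fix A assume "A \<in> prod_algebra I (\<lambda>_. count_space UNIV :: 'b measure)"
  then obtain J E where A: "A = prod_emb I (\<lambda>_. count_space UNIV) J (\<Pi>\<^sub>E j\<in>J. E j)"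
    "finite J" "J \<noteq> {} \<or> I = {}" "J \<subseteq> I" by (rule prod_algebraE)
  have eq: "emeasure (PiM I (\<lambda>i. measure_pmf (K x i))) A = (\<Prod>j\<in>J. emeasure (measure_pmf (K x j)) (E j))" for x
  proof -
    interpret product_prob_space "\<lambda>i. measure_pmf (K x i)" I
      by unfold_locales
    have "A = prod_emb I (\<lambda>i. measure_pmf (K x i)) J (\<Pi>\<^sub>E j\<in>J. E j)"
      unfolding A(1) prod_emb_def by simp
    then show ?thesis using A by (simp add: emeasure_PiM_emb)
  qed
  show "(\<lambda>a. emeasure (PiM I (\<lambda>i. measure_pmf (K a i))) A) \<in> borel_measurable M"
    unfolding eq
  proof (intro borel_measurable_prod_ennreal)
    fix j assume "j \<in> J"
    then have "j \<in> I" using A by auto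
    then show "(\<lambda>x. emeasure (measure_pmf (K x j)) (E j)) \<in> borel_measurable M"
      by (intro measurable_compose[OF K] measurable_emeasure_subprob_algebra) auto
  qed
next
  have "emeasure (PiM I (\<lambda>i. measure_pmf (K x i))) (\<Pi>\<^sub>E i\<in>I. space (count_space UNIV)) = 1" for x
  proof -
    interpret prob_space "PiM I (\<lambda>i. measure_pmf (K x i))"
      by (intro prob_space_PiM) (simp add: prob_space_measure_pmf)
    show ?thesis using emeasure_space_1 by (simp add: space_PiM)
  qed
  then show "(\<lambda>a. emeasure (PiM I (\<lambda>i. measure_pmf (K a i))) (\<Pi>\<^sub>E i\<in>I. space (count_space UNIV))) \<in> borel_measurable M"
    by simp
qed

lemma measurable_restrict_count_space_PiE:
  assumes "finite S" "S \<subseteq> I"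
  shows "(\<lambda>x. restrict x S) \<in> PiM I (\<lambda>_. count_space (UNIV::'b::countable set)) \<rightarrow>\<^sub>M count_space (PiE S (\<lambda>_. UNIV))"
proof -
  have "(\<lambda>x. restrict x S) \<in> PiM I (\<lambda>_. count_space (UNIV::'b set)) \<rightarrow>\<^sub>M PiM S (\<lambda>_. count_space UNIV)"
    using assms by (intro measurable_restrict_subset)
  moreover have "PiM S (\<lambda>_. count_space (UNIV::'b set)) = count_space (PiE S (\<lambda>_. UNIV))"
    using assms by (intro count_space_PiM_finite) auto
  ultimately show ?thesis by simp
qed

lemma measurable_restrict_count_space:
  assumes "finite S" "S \<subseteq> I"
  shows "(\<lambda>x. restrict x S) \<in> PiM I (\<lambda>_. count_space (UNIV::'b::countable set)) \<rightarrow>\<^sub>M count_space UNIV"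
  by (rule measurable_comp[OF measurable_restrict_count_space_PiE[OF assms], of "\<lambda>x. x", simplified o_def]) simp

lemma distr_PiM_restrict_eq_Pi_pmf:
  fixes p :: "'i \<Rightarrow> 'b::countable pmf"
  assumes S: "finite S" "S \<subseteq> I"
  shows "distr (PiM I (\<lambda>i. measure_pmf (p i))) (count_space UNIV) (\<lambda>x. restrict x S) =
    measure_pmf (Pi_pmf S undefined p)"
proof -
  interpret product_prob_space "\<lambda>i. measure_pmf (p i)" I by unfold_locales
  have "sets (PiM I (\<lambda>_. count_space (UNIV::'b set))) = sets (PiM I (\<lambda>i. measure_pmf (p i)))"
    by (intro sets_PiM_cong) auto
  then have restrict_meas: "(\<lambda>x. restrict x S) \<in> PiM I (\<lambda>i. measure_pmf (p i)) \<rightarrow>\<^sub>M count_space UNIV"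
    using measurable_restrict_count_space[OF S, where 'b='b] measurable_cong_sets by blast
  show ?thesis
  proof (rule measure_eqI_countable_AE[where \<Omega>="PiE S (\<lambda>_. UNIV)"])
    show "AE x in distr (PiM I (\<lambda>i. measure_pmf (p i))) (count_space UNIV) (\<lambda>x. restrict x S). x \<in> PiE S (\<lambda>_. UNIV)"
      using restrict_meas by (subst AE_distr_iff) auto
    show "AE x in measure_pmf (Pi_pmf S undefined p). x \<in> PiE S (\<lambda>_. UNIV)"
      using set_Pi_pmf_subset[OF S(1), of undefined p] by (intro AE_pmfI) (auto simp: PiE_def extensional_def)
    show "countable (PiE S (\<lambda>_. UNIV :: 'b set))" using S by (intro countable_PiE) auto
    fix f assume f: "f \<in> PiE S (\<lambda>_. UNIV :: 'b set)"
    have "(\<lambda>x. restrict x S) -` {f} \<inter> space (PiM I (\<lambda>i. measure_pmf (p i))) =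
        prod_emb I (\<lambda>i. measure_pmf (p i)) S (PiE S (\<lambda>i. {f i}))"
      using f by (auto simp: prod_emb_def space_PiM PiE_def extensional_def fun_eq_iff restrict_def Pi_def)
    then have "emeasure (distr (PiM I (\<lambda>i. measure_pmf (p i))) (count_space UNIV) (\<lambda>x. restrict x S)) {f}
       = (\<Prod>i\<in>S. emeasure (measure_pmf (p i)) {f i})"
      using restrict_meas S by (subst emeasure_distr) (auto simp: emeasure_PiM_emb)
    also have "\<dots> = emeasure (measure_pmf (Pi_pmf S undefined p)) {f}"
      using f S by (simp add: emeasure_pmf_single prod_ennreal pmf_Pi PiE_def extensional_def)
    finally show "emeasure (distr (PiM I (\<lambda>i. measure_pmf (p i))) (count_space UNIV) (\<lambda>x. restrict x S)) {f} =
       emeasure (measure_pmf (Pi_pmf S undefined p)) {f}" .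
  qed auto
qed

lemma Pi_pmf_reindex:
  assumes fin: "finite A" and inj: "inj_on \<phi> A" and inv: "\<And>i. i \<in> A \<Longrightarrow> \<psi> (\<phi> i) = i"
  shows "Pi_pmf (\<phi> ` A) undefined (\<lambda>j. q (\<psi> j)) =
    map_pmf (\<lambda>a. restrict (a \<circ> \<psi>) (\<phi> ` A)) (Pi_pmf A undefined q)"
proof (rule pmf_eqI)
  fix f
  show "pmf (Pi_pmf (\<phi> ` A) undefined (\<lambda>j. q (\<psi> j))) f =
    pmf (map_pmf (\<lambda>a. restrict (a \<circ> \<psi>) (\<phi> ` A)) (Pi_pmf A undefined q)) f"
  proof (cases "\<forall>x. x \<notin> \<phi> ` A \<longrightarrow> f x = undefined")
    case True
    have "(\<lambda>a. restrict (a \<circ> \<psi>) (\<phi> ` A)) -` {f} = Pi A (\<lambda>i. {f (\<phi> i)})"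
      using True inv by (auto simp: fun_eq_iff restrict_def Pi_def)
    then have "pmf (map_pmf (\<lambda>a. restrict (a \<circ> \<psi>) (\<phi> ` A)) (Pi_pmf A undefined q)) f =
        (\<Prod>i\<in>A. pmf (q i) (f (\<phi> i)))"
      unfolding pmf_map using fin by (simp add: measure_Pi_pmf_Pi measure_pmf_single)
    also have "\<dots> = (\<Prod>j\<in>\<phi> ` A. pmf (q (\<psi> j)) (f j))"
      using inj inv by (simp add: prod.reindex)
    finally show ?thesis using True fin by (simp add: pmf_Pi)
  next
    case False
    then have "(\<lambda>a. restrict (a \<circ> \<psi>) (\<phi> ` A)) -` {f} = {}" by (auto simp: restrict_def)
    then show ?thesis using False fin by (auto simp: pmf_Pi pmf_map)
  qed
qed

lemma (in prob_space) abs_integral_le_const: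
  fixes f :: "_ \<Rightarrow> real"
  assumes bound: "\<And>x. x \<in> space M \<Longrightarrow> \<bar>f x\<bar> \<le> C"
  shows "\<bar>integral\<^sup>L M f\<bar> \<le> C"
proof (cases "integrable M f")
  case True
  have "\<bar>integral\<^sup>L M f\<bar> \<le> integral\<^sup>L M (\<lambda>x. \<bar>f x\<bar>)"
    using integral_abs_bound[of M f] by simp
  also have "\<dots> \<le> C"
    using True bound by (intro integral_le_const AE_I2) auto
  finally show ?thesis .
next
  case False
  obtain x where "x \<in> space M" using not_empty by blast
  then show ?thesis using bound[of x] False by (simp add: not_integrable_integral_eq)
qed

lemma
  fixes x :: "nat \<Rightarrow> real"
  assumes "0 \<le> \<gamma>" "\<gamma> < 1" and bound: "\<And>t. \<bar>x t\<bar> \<le> C"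
  shows summable_discounted: "summable (\<lambda>t. \<gamma> ^ t * x t)"
    and abs_suminf_discounted_le: "\<bar>\<Sum>t. \<gamma> ^ t * x t\<bar> \<le> C / (1 - \<gamma>)"
proof -
  have le: "\<bar>\<gamma> ^ t * x t\<bar> \<le> C * \<gamma> ^ t" for t
    using mult_left_mono[OF bound[of t], of "\<gamma> ^ t"] assms by (simp add: abs_mult mult.commute)
  have geom: "summable (\<lambda>t. C * \<gamma> ^ t)" using assms by (intro summable_mult summable_geometric) simp
  have abs_summable: "summable (\<lambda>t. \<bar>\<gamma> ^ t * x t\<bar>)"
    by (rule summable_rabs_comparison_test[OF _ geom]) (use le in auto)
  then show "summable (\<lambda>t. \<gamma> ^ t * x t)" by (rule summable_rabs_cancel)
  have "\<bar>\<Sum>t. \<gamma> ^ t * x t\<bar> \<le> (\<Sum>t. \<bar>\<gamma> ^ t * x t\<bar>)" by (rule summable_rabs[OF abs_summable])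
  also have "\<dots> \<le> (\<Sum>t. C * \<gamma> ^ t)" by (rule suminf_le[OF le abs_summable geom])
  also have "\<dots> = C / (1 - \<gamma>)" using assms by (simp add: suminf_mult suminf_geometric)
  finally show "\<bar>\<Sum>t. \<gamma> ^ t * x t\<bar> \<le> C / (1 - \<gamma>)" .
qed

lemma abs_expectation_diff_le:
  fixes X :: "'a \<Rightarrow> real"
  assumes bound: "\<And>g. g \<in> set_pmf M \<Longrightarrow> \<bar>X g - c\<bar> \<le> K" and "0 \<le> \<epsilon>"
  shows "\<bar>measure_pmf.expectation M X - c\<bar> \<le> \<epsilon> + K * measure_pmf.prob M {g. \<epsilon> < \<bar>X g - c\<bar>}"
proof -
  define E where "E = {g. \<epsilon> < \<bar>X g - c\<bar>}"
  have "0 \<le> K" using bound set_pmf_not_empty by fastforce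
  have int_X: "integrable (measure_pmf M) X"
    by (rule measure_pmf.integrable_const_bound[where B="\<bar>c\<bar> + K"]) (auto intro!: AE_pmfI dest!: bound)
  have int_bound: "integrable (measure_pmf M) (\<lambda>g. \<epsilon> + K * indicator E g)"
    by (intro Bochner_Integration.integrable_add integrable_mult_right integrable_real_indicator)
       (auto simp: measure_pmf.emeasure_eq_measure)
  have "\<bar>measure_pmf.expectation M X - c\<bar> = \<bar>measure_pmf.expectation M (\<lambda>g. X g - c)\<bar>"
    using int_X by (simp add: measure_pmf.prob_space)
  also have "\<dots> \<le> measure_pmf.expectation M (\<lambda>g. \<bar>X g - c\<bar>)"
    using integral_abs_bound[of "measure_pmf M" "\<lambda>g. X g - c"] by simp
  also have "\<dots> \<le> measure_pmf.expectation M (\<lambda>g. \<epsilon> + K * indicator E g)"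
  proof (rule integral_mono_AE[OF _ int_bound], use int_X in simp, rule AE_pmfI)
    fix g assume "g \<in> set_pmf M"
    then show "\<bar>X g - c\<bar> \<le> \<epsilon> + K * indicator E g"
      using bound[of g] \<open>0 \<le> \<epsilon>\<close> by (cases "g \<in> E") (auto simp: E_def)
  qed
  also have "\<dots> = \<epsilon> + K * measure_pmf.prob M E"
    by (subst Bochner_Integration.integral_add)
       (auto simp: measure_pmf.prob_space measure_pmf.emeasure_eq_measure)
  finally show ?thesis unfolding E_def .
qed

lemma expectation_tendsto_if_tendsto_in_prob:
  fixes X :: "'a \<Rightarrow> real"
  assumes bound: "\<And>n g. g \<in> set_pmf (M n) \<Longrightarrow> \<bar>X g\<bar> \<le> K"
    and in_prob: "\<And>\<epsilon>. \<epsilon> > 0 \<Longrightarrow> (\<lambda>n. measure_pmf.prob (M n) {g. \<epsilon> < \<bar>X g - c\<bar>}) \<longlonglongrightarrow> 0"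
  shows "(\<lambda>n. measure_pmf.expectation (M n) X) \<longlonglongrightarrow> c"
proof (rule LIMSEQ_I)
  fix r :: real assume "0 < r"
  define K' where "K' = \<bar>K\<bar> + \<bar>c\<bar>"
  have "0 \<le> K'" by (simp add: K'_def)
  have diff_bound: "\<bar>X g - c\<bar> \<le> K'" if "g \<in> set_pmf (M n)" for n g
    using bound[OF that] by (simp add: K'_def)
  have "0 < r / (2 * (K' + 1))" using \<open>0 < r\<close> \<open>0 \<le> K'\<close> by simp
  moreover have "(\<lambda>n. measure_pmf.prob (M n) {g. r / 2 < \<bar>X g - c\<bar>}) \<longlonglongrightarrow> 0"
    using \<open>0 < r\<close> by (intro in_prob) simp
  ultimately obtain n0 where n0: "\<And>n. n \<ge> n0 \<Longrightarrow>
      measure_pmf.prob (M n) {g. r / 2 < \<bar>X g - c\<bar>} < r / (2 * (K' + 1))"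
    using LIMSEQ_D by fastforce
  have "\<bar>measure_pmf.expectation (M n) X - c\<bar> < r" if "n \<ge> n0" for n
  proof -
    have "\<bar>measure_pmf.expectation (M n) X - c\<bar> \<le>
        r / 2 + K' * measure_pmf.prob (M n) {g. r / 2 < \<bar>X g - c\<bar>}"
      using \<open>0 < r\<close> by (intro abs_expectation_diff_le diff_bound) auto
    also have "\<dots> \<le> r / 2 + K' * (r / (2 * (K' + 1)))"
      using n0[OF that] \<open>0 \<le> K'\<close> by (intro add_left_mono mult_left_mono) auto
    also have "\<dots> < r"
      using \<open>0 \<le> K'\<close> \<open>0 < r\<close> by (simp add: field_simps)
    finally show ?thesis .
  qed
  then show "\<exists>n0. \<forall>n\<ge>n0. norm (measure_pmf.expectation (M n) X - c) < r" by auto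
qed

definition nbhd :: "graph \<Rightarrow> nat set \<Rightarrow> nat set" where
  "nbhd G S = S \<union> (\<Union>i\<in>S. nbrs G i)"

lemma subset_nbhd: "S \<subseteq> nbhd G S"
  by (auto simp: nbhd_def)

lemma nbrs_subset_nbhd: "i \<in> S \<Longrightarrow> nbrs G i \<subseteq> nbhd G S"
  by (auto simp: nbhd_def)

lemma nbhd_subset_verts: "S \<subseteq> verts G \<Longrightarrow> nbhd G S \<subseteq> verts G"
  by (auto simp: nbhd_def nbrs_def)

lemma finite_nbhd: "finite S \<Longrightarrow> (\<And>i. i \<in> S \<Longrightarrow> finite (nbrs G i)) \<Longrightarrow> finite (nbhd G S)"
  by (auto simp: nbhd_def)

lemma verts_induced [simp]: "verts (induced G S) = verts G \<inter> S"
  by (simp add: induced_def verts_def)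

lemma adj_induced [simp]: "adj (induced G S) i j = (adj G i j \<and> i \<in> S \<and> j \<in> S)"
  by (simp add: induced_def adj_def)

lemma ballset_subset_Suc: "ballset G k r \<subseteq> ballset G (Suc k) r"
  by auto

lemma ballset_mono: "j \<le> k \<Longrightarrow> ballset G j r \<subseteq> ballset G k r"
  by (induction k) (auto simp: le_Suc_eq)

lemma root_in_ballset: "r \<in> ballset G k r"
  using ballset_mono[of 0 k G r] by auto

lemma ballset_subset_verts: "wf_graph G \<Longrightarrow> r \<in> verts G \<Longrightarrow> ballset G k r \<subseteq> verts G"
  by (induction k) (auto simp: wf_graph_def)

lemma nbhd_ballset: "wf_graph G \<Longrightarrow> nbhd G (ballset G k r) = ballset G (Suc k) r"
  by (auto simp: nbhd_def nbrs_def wf_graph_def)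

lemma nbrs_subset_ballset_Suc: "v \<in> ballset G k r \<Longrightarrow> nbrs G v \<subseteq> ballset G (Suc k) r"
  by (auto simp: nbrs_def)

lemma finite_ballset:
  assumes "wf_graph G" "r \<in> verts G" "\<And>i. i \<in> verts G \<Longrightarrow> finite (nbrs G i)"
  shows "finite (ballset G k r)"
proof (induction k)
  case (Suc k)
  then show ?case
    using assms ballset_subset_verts[OF assms(1,2), of k] nbhd_ballset[OF assms(1), of k r]
    by (metis finite_nbhd subset_iff)
qed simp

lemma finite_nbrs:
  assumes "wf_graph G" "\<And>i. i \<in> verts G \<Longrightarrow> finite (nbrs G i)"
  shows "finite (nbrs G i)"
proof (cases "i \<in> verts G")
  case False
  then have "nbrs G i = {}" using assms(1) by (auto simp: nbrs_def wf_graph_def)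
  then show ?thesis by simp
qed (use assms in auto)

declare ballset.simps(2) [simp del]

lemma comp_set_adj_closed:
  assumes "v \<in> comp_set G i" "adj G v j"
  shows "j \<in> comp_set G i"
proof -
  obtain k where "v \<in> ballset G k i" using assms(1) by (auto simp: comp_set_def)
  then have "j \<in> ballset G (Suc k) i" using assms(2) by (auto simp: ballset.simps(2))
  then show ?thesis unfolding comp_set_def by blast
qed

lemma root_in_comp_set: "i \<in> comp_set G i"
  unfolding comp_set_def using root_in_ballset[of i G 0] by blast

lemma nbrs_induced_comp_set: "v \<in> comp_set G i \<Longrightarrow> nbrs (induced G (comp_set G i)) v = nbrs G v"
  using comp_set_adj_closed[of v G i] by (auto simp: nbrs_def)


definition restrict_state :: "nat set \<Rightarrow> 's \<times> (nat \<Rightarrow> nat) \<Rightarrow> 's \<times> (nat \<Rightarrow> nat)" where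
  "restrict_state S x = (fst x, restrict (snd x) S)"

lemma measurable_restrict_state:
  assumes "finite S" "S \<subseteq> verts G"
  shows "restrict_state S \<in> (stM G :: ('s::countable \<times> (nat \<Rightarrow> nat)) measure) \<rightarrow>\<^sub>M count_space UNIV"
proof -
  have "restrict_state S \<in> (stM G :: ('s \<times> (nat \<Rightarrow> nat)) measure) \<rightarrow>\<^sub>M
      count_space (UNIV::'s set) \<Otimes>\<^sub>M count_space (PiE S (\<lambda>_. UNIV :: nat set))"
    unfolding stM_def restrict_state_def[abs_def]
    by (intro measurable_Pair measurable_fst'' assms
        measurable_compose[OF measurable_snd measurable_restrict_count_space_PiE]) simp
  also have "count_space (UNIV::'s set) \<Otimes>\<^sub>M count_space (PiE S (\<lambda>_. UNIV :: nat set)) =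
     count_space (UNIV \<times> PiE S (\<lambda>_. UNIV))"
    by (intro pair_measure_countable countable_PiE assms) auto
  finally show ?thesis
    by (rule measurable_comp[of _ _ _ "\<lambda>x. x", simplified o_def]) simp
qed

lemma measurable_state_component:
  "i \<in> verts G \<Longrightarrow> (\<lambda>x. snd x i) \<in> (stM G :: ('s \<times> (nat \<Rightarrow> nat)) measure) \<rightarrow>\<^sub>M count_space UNIV"
  unfolding stM_def by (intro measurable_compose[OF measurable_snd measurable_component_singleton])

lemma measurable_actions:
  "(\<lambda>x. actions pol G t (snd x)) \<in> (stM G :: ('s \<times> (nat \<Rightarrow> nat)) measure) \<rightarrow>\<^sub>M
     subprob_algebra (PiM (verts G) (\<lambda>_. count_space UNIV))"
  unfolding actions_def
  by (intro measurable_PiM_pmf_kernel measurable_compose[OF measurable_state_component measurable_measure_pmf])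

lemma arr_rate_restrict:
  "i \<in> S \<Longrightarrow> nbrs G i \<subseteq> S \<Longrightarrow> arr_rate l G (restrict a S) i = arr_rate l G a i"
  unfolding arr_rate_def by (auto intro!: sum.cong simp: subset_eq)

text \<open>The arrival rate at \<open>i\<close> only reads the finitely many actions in the closed
  neighbourhood of \<open>i\<close>, so the kernel factors through a countable space.\<close>
lemma measurable_queue_kernel:
  fixes lam :: "'s::countable \<Rightarrow> real"
  assumes i: "i \<in> verts G" and fin: "finite (nbrs G i)"
  shows "(\<lambda>y. measure_pmf (bd_pmf B (arr_rate (lam (fst (fst y))) G (snd y) i) al dt (snd (fst y) i)))
     \<in> ((stM G :: ('s \<times> (nat \<Rightarrow> nat)) measure) \<Otimes>\<^sub>M PiM (verts G) (\<lambda>_. count_space (UNIV::bool set)))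
        \<rightarrow>\<^sub>M subprob_algebra (count_space UNIV)"
proof -
  define S where "S = nbhd G {i}"
  have S: "finite S" "S \<subseteq> verts G" "i \<in> S" "nbrs G i \<subseteq> S"
    using i fin by (auto simp: S_def nbhd_def nbrs_def)
  define h where "h = (\<lambda>(s::'s, n::nat, a::nat \<Rightarrow> bool). measure_pmf (bd_pmf B (arr_rate (lam s) G a i) al dt n))"
  have "(\<lambda>y. (fst (fst y), snd (fst y) i, restrict (snd y) S)) \<in>
      ((stM G :: ('s \<times> (nat \<Rightarrow> nat)) measure) \<Otimes>\<^sub>M PiM (verts G) (\<lambda>_. count_space (UNIV::bool set)))
      \<rightarrow>\<^sub>M count_space (UNIV::'s set) \<Otimes>\<^sub>M (count_space (UNIV::nat set) \<Otimes>\<^sub>M count_space (PiE S (\<lambda>_. UNIV :: bool set)))"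
    unfolding stM_def
    by (intro measurable_Pair measurable_compose[OF measurable_fst measurable_fst]
          measurable_compose[OF measurable_fst measurable_state_component[unfolded stM_def]]
          measurable_compose[OF measurable_snd measurable_restrict_count_space_PiE] S i)
  also have "count_space (UNIV::'s set) \<Otimes>\<^sub>M (count_space (UNIV::nat set) \<Otimes>\<^sub>M count_space (PiE S (\<lambda>_. UNIV :: bool set)))
     = count_space (UNIV \<times> (UNIV \<times> PiE S (\<lambda>_. UNIV)))"
    using S by (simp add: pair_measure_countable countable_PiE)
  finally have "(\<lambda>y. h (fst (fst y), snd (fst y) i, restrict (snd y) S)) \<in>
      ((stM G :: ('s \<times> (nat \<Rightarrow> nat)) measure) \<Otimes>\<^sub>M PiM (verts G) (\<lambda>_. count_space (UNIV::bool set)))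
        \<rightarrow>\<^sub>M subprob_algebra (count_space UNIV)"
    by (rule measurable_comp[of _ _ _ h, simplified o_def])
       (auto simp: h_def measure_pmf_in_subprob_algebra)
  then show ?thesis
    using S by (simp add: h_def arr_rate_restrict)
qed

lemma measurable_queue_update:
  fixes lam :: "'s::countable \<Rightarrow> real"
  assumes lf: "\<And>i. i \<in> verts G \<Longrightarrow> finite (nbrs G i)"
  shows "(\<lambda>y. bind (PiM (verts G) (\<lambda>i. measure_pmf (bd_pmf B (arr_rate (lam (fst (fst y))) G (snd y) i) al dt (snd (fst y) i))))
        (\<lambda>z'. distr (measure_pmf (P (fst (fst y)))) (stM G) (\<lambda>s'. (s', z'))))
     \<in> ((stM G :: ('s \<times> (nat \<Rightarrow> nat)) measure) \<Otimes>\<^sub>M PiM (verts G) (\<lambda>_. count_space (UNIV::bool set)))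
       \<rightarrow>\<^sub>M subprob_algebra (stM G)"
proof (rule measurable_bind[OF measurable_PiM_pmf_kernel[OF measurable_queue_kernel[OF _ lf]]])
  let ?M = "((stM G :: ('s \<times> (nat \<Rightarrow> nat)) measure) \<Otimes>\<^sub>M PiM (verts G) (\<lambda>_. count_space (UNIV::bool set)))
    \<Otimes>\<^sub>M PiM (verts G) (\<lambda>_. count_space (UNIV::nat set))"
  have "(\<lambda>y. distr (measure_pmf (P (fst (fst (fst y))))) (stM G) (\<lambda>s'. (s', snd y)))
     \<in> ?M \<rightarrow>\<^sub>M subprob_algebra (stM G)"
  proof (rule measurable_distr2[where M="count_space UNIV"])
    show "(\<lambda>(y, s'). (s', snd y)) \<in> ?M \<Otimes>\<^sub>M count_space UNIV \<rightarrow>\<^sub>M stM G"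
      unfolding stM_def by (simp add: case_prod_unfold)
    have "(\<lambda>y. fst (fst (fst y))) \<in> ?M \<rightarrow>\<^sub>M count_space UNIV"
      unfolding stM_def by simp
    then show "(\<lambda>y. measure_pmf (P (fst (fst (fst y))))) \<in> ?M \<rightarrow>\<^sub>M subprob_algebra (count_space UNIV)"
      by (rule measurable_compose) (simp add: measure_pmf_in_subprob_algebra)
  qed
  then show "(\<lambda>y. distr (measure_pmf (P (fst (fst (fst y))))) (stM G) (\<lambda>s'. (s', snd y)))
     \<in> ?M \<rightarrow>\<^sub>M subprob_algebra (stM G)" .
qed

lemma measurable_epoch_step:
  fixes lam :: "'s::countable \<Rightarrow> real"
  assumes "\<And>i. i \<in> verts G \<Longrightarrow> finite (nbrs G i)"
  shows "epoch_step B al dt lam P pol G t \<in> (stM G :: ('s \<times> (nat \<Rightarrow> nat)) measure) \<rightarrow>\<^sub>M subprob_algebra (stM G)"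
  unfolding epoch_step_def[abs_def]
  by (rule measurable_bind[OF measurable_actions]) (use measurable_queue_update[OF assms] in simp)

lemma space_stM_not_empty: "space (stM G) \<noteq> {}"
  by (simp add: stM_def space_pair_measure space_PiM PiE_eq_empty_iff)

lemma sets_state_dist:
  fixes lam :: "'s::countable \<Rightarrow> real"
  assumes "\<And>i. i \<in> verts (fst g) \<Longrightarrow> finite (nbrs (fst g) i)"
  shows "sets (state_dist B al dt lam P l0 pol g t) = sets (stM (fst g))"
proof (induction t)
  case (Suc t)
  then have "space (state_dist B al dt lam P l0 pol g t) = space (stM (fst g))"
    by (rule sets_eq_imp_space_eq)
  then show ?case
    using subprob_measurableD(2)[OF measurable_epoch_step[OF assms, where B=B and al=al and dt=dt and lam=lam and P=P and pol=pol and t=t]]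
    by (simp, intro sets_bind) (auto simp: space_stM_not_empty)
qed simp

section \<open>Marginals of the dynamics on finite sets of nodes\<close>

text \<open>The marginal at epoch \<open>t + 1\<close> of the state on a finite set \<open>S\<close> is obtained from the
  marginal at epoch \<open>t\<close> on \<open>nbhd G S\<close> by a local kernel; unrolling, the marginal on \<open>S\<close> at
  epoch \<open>t\<close> only involves the \<open>t\<close>-neighbourhood of \<open>S\<close>.\<close>

context
  fixes B :: nat and al dt :: real and lam :: "'s::countable \<Rightarrow> real" and P :: "'s \<Rightarrow> 's pmf"
    and l0 :: "'s pmf" and pol :: "nat \<Rightarrow> nat \<Rightarrow> real"
begin

definition local_step :: "graph \<Rightarrow> nat \<Rightarrow> nat set \<Rightarrow> 's \<times> (nat \<Rightarrow> nat) \<Rightarrow> ('s \<times> (nat \<Rightarrow> nat)) pmf" where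
  "local_step G t S x =
     bind_pmf (Pi_pmf (nbhd G S) undefined (\<lambda>j. bernoulli_pmf (pol t (snd x j)))) (\<lambda>a.
     bind_pmf (Pi_pmf S undefined (\<lambda>i. bd_pmf B (arr_rate (lam (fst x)) G a i) al dt (snd x i))) (\<lambda>z'.
     map_pmf (\<lambda>s'. (s', z')) (P (fst x))))"

primrec local_state_dist :: "mgraph \<Rightarrow> nat \<Rightarrow> nat set \<Rightarrow> ('s \<times> (nat \<Rightarrow> nat)) pmf" where
  "local_state_dist g 0 S = map_pmf (\<lambda>s. (s, restrict (snd g) S)) l0"
| "local_state_dist g (Suc t) S = bind_pmf (local_state_dist g t (nbhd (fst g) S)) (local_step (fst g) t S)"

definition local_drops :: "graph \<Rightarrow> nat \<Rightarrow> nat \<Rightarrow> 's \<times> (nat \<Rightarrow> nat) \<Rightarrow> real" where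
  "local_drops G t i x = measure_pmf.expectation (Pi_pmf (nbhd G {i}) undefined (\<lambda>j. bernoulli_pmf (pol t (snd x j))))
      (\<lambda>a. drops B (arr_rate (lam (fst x)) G a i) al dt (snd x i))"

lemma distr_queue_update_restrict:
  fixes p :: "nat \<Rightarrow> nat pmf" and Q :: "'s pmf"
  assumes S: "finite S" "S \<subseteq> verts G"
  shows "distr (bind (PiM (verts G) (\<lambda>i. measure_pmf (p i))) (\<lambda>z'. distr (measure_pmf Q) (stM G) (\<lambda>s'. (s', z'))))
      (count_space UNIV) (restrict_state S) =
    measure_pmf (bind_pmf (Pi_pmf S undefined p) (\<lambda>z'. map_pmf (\<lambda>s'. (s', z')) Q))"
proof -
  let ?Z = "PiM (verts G) (\<lambda>i. measure_pmf (p i))"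
  have sets_Z: "sets ?Z = sets (PiM (verts G) (\<lambda>_. count_space (UNIV::nat set)))"
    by (intro sets_PiM_cong) auto
  have "space ?Z \<noteq> {}"
    using prob_space.not_empty[OF prob_space_PiM] by (simp add: prob_space_measure_pmf)
  moreover have "(\<lambda>z'. distr (measure_pmf Q) (stM G) (\<lambda>s'. (s', z'))) \<in> ?Z \<rightarrow>\<^sub>M subprob_algebra (stM G)"
    unfolding measurable_cong_sets[OF sets_Z refl]
    by (rule measurable_distr2[where M="count_space UNIV"])
       (auto simp: stM_def case_prod_unfold measure_pmf_in_subprob_algebra)
  moreover have restrict_meas: "(\<lambda>z. restrict z S) \<in> ?Z \<rightarrow>\<^sub>M count_space UNIV"
    unfolding measurable_cong_sets[OF sets_Z refl] by (rule measurable_restrict_count_space[OF S])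
  moreover have "distr (distr (measure_pmf Q) (stM G) (\<lambda>s'. (s', z'))) (count_space UNIV) (restrict_state S) =
      measure_pmf (map_pmf (\<lambda>s'. (s', restrict z' S)) Q)" if "z' \<in> space ?Z" for z'
  proof -
    have "(\<lambda>s'. (s', z')) \<in> measure_pmf Q \<rightarrow>\<^sub>M (stM G :: ('s \<times> (nat \<Rightarrow> nat)) measure)"
      using that by (simp add: stM_def space_pair_measure space_PiM)
    then show ?thesis
      by (simp add: distr_distr[OF measurable_restrict_state[OF S]] map_pmf_rep_eq o_def restrict_state_def)
  qed
  ultimately have "distr (bind ?Z (\<lambda>z'. distr (measure_pmf Q) (stM G) (\<lambda>s'. (s', z')))) (count_space UNIV) (restrict_state S) =
      bind ?Z (\<lambda>z'. measure_pmf (map_pmf (\<lambda>s'. (s', restrict z' S)) Q))"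
    by (simp add: distr_bind[OF _ _ measurable_restrict_state[OF S]] cong: bind_cong)
  also have "\<dots> = bind (distr ?Z (count_space UNIV) (\<lambda>z. restrict z S)) (\<lambda>w. measure_pmf (map_pmf (\<lambda>s'. (s', w)) Q))"
    by (rule bind_distr[where K="count_space UNIV", OF restrict_meas _ \<open>space ?Z \<noteq> {}\<close>, symmetric])
       (auto simp: measure_pmf_in_subprob_algebra)
  also have "\<dots> = measure_pmf (bind_pmf (Pi_pmf S undefined p) (\<lambda>z'. map_pmf (\<lambda>s'. (s', z')) Q))"
    by (simp add: distr_PiM_restrict_eq_Pi_pmf[OF S] measure_pmf_bind)
  finally show ?thesis .
qed

lemma distr_epoch_step_restrict:
  assumes lf: "\<And>i. i \<in> verts G \<Longrightarrow> finite (nbrs G i)"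
    and S: "finite S" "S \<subseteq> verts G" and x: "x \<in> space (stM G :: ('s \<times> (nat \<Rightarrow> nat)) measure)"
  shows "distr (epoch_step B al dt lam P pol G t x) (count_space UNIV) (restrict_state S) =
    measure_pmf (local_step G t S (restrict_state (nbhd G S) x))"
proof -
  let ?N = "PiM (verts G) (\<lambda>_. count_space (UNIV::bool set))"
  define A where "A = actions pol G t (snd x)"
  define K where "K = (\<lambda>a. bind (PiM (verts G) (\<lambda>i. measure_pmf (bd_pmf B (arr_rate (lam (fst x)) G a i) al dt (snd x i))))
    (\<lambda>z'. distr (measure_pmf (P (fst x))) (stM G) (\<lambda>s'. (s', z'))))"
  define F where "F = (\<lambda>a. measure_pmf (bind_pmf (Pi_pmf S undefined
    (\<lambda>i. bd_pmf B (arr_rate (lam (fst x)) G a i) al dt (snd x i))) (\<lambda>z'. map_pmf (\<lambda>s'. (s', z')) (P (fst x)))))"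
  have nbhd_S: "finite (nbhd G S)" "nbhd G S \<subseteq> verts G"
    using S lf by (auto intro!: finite_nbhd nbhd_subset_verts)
  have sets_A: "sets A = sets ?N" unfolding A_def actions_def by (intro sets_PiM_cong) auto
  have "space A \<noteq> {}"
    unfolding A_def actions_def
    using prob_space.not_empty[OF prob_space_PiM] by (simp add: prob_space_measure_pmf)
  moreover have "K \<in> A \<rightarrow>\<^sub>M subprob_algebra (stM G)"
    unfolding measurable_cong_sets[OF sets_A refl] K_def
    using measurable_comp[OF measurable_Pair1'[OF x, of ?N] measurable_queue_update[OF lf]]
    by (simp add: o_def)
  moreover have restrict_meas: "(\<lambda>a. restrict a (nbhd G S)) \<in> A \<rightarrow>\<^sub>M count_space UNIV"
    unfolding measurable_cong_sets[OF sets_A refl] by (rule measurable_restrict_count_space[OF nbhd_S])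
  moreover have "distr (K a) (count_space UNIV) (restrict_state S) = F (restrict a (nbhd G S))" for a
  proof -
    have "Pi_pmf S undefined (\<lambda>i. bd_pmf B (arr_rate (lam (fst x)) G a i) al dt (snd x i)) =
        Pi_pmf S undefined (\<lambda>i. bd_pmf B (arr_rate (lam (fst x)) G (restrict a (nbhd G S)) i) al dt (snd x i))"
      by (intro Pi_pmf_cong refl) (simp add: arr_rate_restrict nbrs_subset_nbhd subsetD[OF subset_nbhd])
    then show ?thesis
      unfolding K_def F_def by (simp add: distr_queue_update_restrict[OF S])
  qed
  ultimately have "distr (bind A K) (count_space UNIV) (restrict_state S) = bind (distr A (count_space UNIV) (\<lambda>a. restrict a (nbhd G S))) F"
    by (simp add: distr_bind[OF _ _ measurable_restrict_state[OF S]] bind_distr[where K="count_space UNIV"]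
        F_def measure_pmf_in_subprob_algebra cong: bind_cong)
  also have "\<dots> = measure_pmf (local_step G t S x)"
    by (simp add: A_def actions_def distr_PiM_restrict_eq_Pi_pmf[OF nbhd_S] local_step_def F_def measure_pmf_bind)
  also have "local_step G t S x = local_step G t S (restrict_state (nbhd G S) x)"
    using subset_nbhd[of S G] unfolding local_step_def restrict_state_def
    by (intro bind_pmf_cong Pi_pmf_cong refl) auto
  finally show ?thesis
    by (simp add: epoch_step_def A_def K_def)
qed

lemma distr_state_dist_restrict:
  assumes lf: "\<And>i. i \<in> verts (fst g) \<Longrightarrow> finite (nbrs (fst g) i)"
  shows "finite S \<Longrightarrow> S \<subseteq> verts (fst g) \<Longrightarrow>
     distr (state_dist B al dt lam P l0 pol g t) (count_space UNIV) (restrict_state S) = measure_pmf (local_state_dist g t S)"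
proof (induction t arbitrary: S)
  case 0
  have "(\<lambda>s. (s, restrict (snd g) (verts (fst g)))) \<in> measure_pmf l0 \<rightarrow>\<^sub>M (stM (fst g) :: ('s \<times> (nat \<Rightarrow> nat)) measure)"
    by (simp add: stM_def space_pair_measure space_PiM)
  note distr_distr[OF measurable_restrict_state[OF 0] this]
  moreover have "restrict_state S \<circ> (\<lambda>s::'s. (s, restrict (snd g) (verts (fst g)))) = (\<lambda>s. (s, restrict (snd g) S))"
    using 0 by (auto simp: restrict_state_def fun_eq_iff restrict_def)
  ultimately show ?case
    by (simp only: local_state_dist.simps state_dist.simps map_pmf_rep_eq)
next
  case (Suc t)
  let ?SD = "state_dist B al dt lam P l0 pol g t"
  have sets: "sets ?SD = sets (stM (fst g))" by (rule sets_state_dist[OF lf])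
  have space_SD: "space ?SD = space (stM (fst g))" using sets_eq_imp_space_eq[OF sets] .
  have nbhd_S: "finite (nbhd (fst g) S)" "nbhd (fst g) S \<subseteq> verts (fst g)"
    using Suc.prems lf by (auto intro!: finite_nbhd nbhd_subset_verts)
  have kernel: "epoch_step B al dt lam P pol (fst g) t \<in> ?SD \<rightarrow>\<^sub>M subprob_algebra (stM (fst g))"
    using measurable_epoch_step[OF lf, where lam=lam] by (simp add: measurable_cong_sets[OF sets refl])
  have "distr (state_dist B al dt lam P l0 pol g (Suc t)) (count_space UNIV) (restrict_state S) =
      bind ?SD (\<lambda>x. distr (epoch_step B al dt lam P pol (fst g) t x) (count_space UNIV) (restrict_state S))"
    using distr_bind[OF kernel _ measurable_restrict_state[OF Suc.prems]] space_stM_not_empty[of "fst g"]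
    by (simp add: space_SD)
  also have "\<dots> = bind ?SD (\<lambda>x. measure_pmf (local_step (fst g) t S (restrict_state (nbhd (fst g) S) x)))"
    using space_SD by (intro bind_cong refl distr_epoch_step_restrict[OF lf Suc.prems]) auto
  also have "\<dots> = bind (distr ?SD (count_space UNIV) (restrict_state (nbhd (fst g) S)))
      (\<lambda>y. measure_pmf (local_step (fst g) t S y))"
    using measurable_restrict_state[OF nbhd_S] space_stM_not_empty[of "fst g"]
    by (intro bind_distr[where K="count_space UNIV", symmetric])
       (auto simp: measurable_cong_sets[OF sets refl] space_SD measure_pmf_in_subprob_algebra)
  also have "\<dots> = measure_pmf (local_state_dist g (Suc t) S)"
    by (simp add: Suc.IH[OF nbhd_S] measure_pmf_bind)
  finally show ?case .
qed

lemma expectation_actions_drops: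
  assumes lf: "\<And>i. i \<in> verts G \<Longrightarrow> finite (nbrs G i)" and i: "i \<in> verts G"
  shows "(\<integral>a. drops B (arr_rate (lam (fst x)) G a i) al dt (snd x i) \<partial>actions pol G t (snd x)) =
    local_drops G t i (restrict_state (nbhd G {i}) x)"
proof -
  let ?S = "nbhd G {i}"
  have S: "finite ?S" "?S \<subseteq> verts G" using lf i by (auto intro!: finite_nbhd nbhd_subset_verts)
  have i_S: "i \<in> ?S" "nbrs G i \<subseteq> ?S" by (auto simp: nbhd_def)
  have "sets (actions pol G t (snd x)) = sets (PiM (verts G) (\<lambda>_. count_space (UNIV::bool set)))"
    unfolding actions_def by (intro sets_PiM_cong) auto
  then have restrict_meas: "(\<lambda>a. restrict a ?S) \<in> actions pol G t (snd x) \<rightarrow>\<^sub>M count_space UNIV"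
    using measurable_restrict_count_space[OF S] measurable_cong_sets by blast
  have "(\<integral>a. drops B (arr_rate (lam (fst x)) G a i) al dt (snd x i) \<partial>actions pol G t (snd x)) =
      (\<integral>a. drops B (arr_rate (lam (fst x)) G (restrict a ?S) i) al dt (snd x i) \<partial>actions pol G t (snd x))"
    using i_S by (simp add: arr_rate_restrict)
  also have "\<dots> = (\<integral>a. drops B (arr_rate (lam (fst x)) G a i) al dt (snd x i)
      \<partial>distr (actions pol G t (snd x)) (count_space UNIV) (\<lambda>a. restrict a ?S))"
    by (rule integral_distr[OF restrict_meas, symmetric]) simp
  also have "distr (actions pol G t (snd x)) (count_space UNIV) (\<lambda>a. restrict a ?S) =
      measure_pmf (Pi_pmf ?S undefined (\<lambda>j. bernoulli_pmf (pol t (snd (restrict_state ?S x) j))))"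
    unfolding actions_def distr_PiM_restrict_eq_Pi_pmf[OF S]
    by (intro arg_cong[where f=measure_pmf] Pi_pmf_cong) (auto simp: restrict_state_def)
  finally show ?thesis using i_S by (simp add: local_drops_def restrict_state_def)
qed

lemma exp_drops_eq_local:
  assumes lf: "\<And>i. i \<in> verts (fst g) \<Longrightarrow> finite (nbrs (fst g) i)" and i: "i \<in> verts (fst g)"
  shows "exp_drops B al dt lam P l0 pol g i t =
    measure_pmf.expectation (local_state_dist g t (nbhd (fst g) {i})) (local_drops (fst g) t i)"
proof -
  let ?S = "nbhd (fst g) {i}" and ?SD = "state_dist B al dt lam P l0 pol g t"
  have S: "finite ?S" "?S \<subseteq> verts (fst g)" using lf i by (auto intro!: finite_nbhd nbhd_subset_verts)
  have restrict_meas: "restrict_state ?S \<in> ?SD \<rightarrow>\<^sub>M count_space UNIV"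
    using measurable_restrict_state[OF S] by (simp add: measurable_cong_sets[OF sets_state_dist[OF lf] refl])
  have "exp_drops B al dt lam P l0 pol g i t = (\<integral>x. local_drops (fst g) t i (restrict_state ?S x) \<partial>?SD)"
    unfolding exp_drops_def by (intro Bochner_Integration.integral_cong refl expectation_actions_drops lf i)
  also have "\<dots> = (\<integral>x. local_drops (fst g) t i x \<partial>distr ?SD (count_space UNIV) (restrict_state ?S))"
    by (rule integral_distr[OF restrict_meas, symmetric]) simp
  finally show ?thesis
    by (simp add: distr_state_dist_restrict[OF lf S])
qed

end

section \<open>Transfer of marginals along partial isomorphisms\<close>

locale partial_iso =
  fixes G G' :: graph and z z' :: "nat \<Rightarrow> nat" and \<phi> :: "nat \<Rightarrow> nat" and W W0 :: "nat set"
  assumes inj: "inj_on \<phi> W" and interior: "W0 \<subseteq> W"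
    and nbrs_in: "\<And>v. v \<in> W0 \<Longrightarrow> nbrs G v \<subseteq> W"
    and nbrs_image: "\<And>v. v \<in> W0 \<Longrightarrow> nbrs G' (\<phi> v) = \<phi> ` nbrs G v"
    and marks: "\<And>v. v \<in> W \<Longrightarrow> z' (\<phi> v) = z v"
begin

definition \<psi> where "\<psi> = inv_into W \<phi>"

lemma \<psi>_\<phi>: "v \<in> W \<Longrightarrow> \<psi> (\<phi> v) = v"
  unfolding \<psi>_def using inj by simp

definition relabel :: "nat set \<Rightarrow> 's \<times> (nat \<Rightarrow> nat) \<Rightarrow> 's \<times> (nat \<Rightarrow> nat)" where
  "relabel T x = (fst x, restrict (snd x \<circ> \<psi>) T)"

text \<open>The iterated neighbourhoods of \<open>S\<close> on which the marginal of \<open>S\<close> at epoch \<open>t\<close>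
  depends stay in the interior \<open>W0\<close>, and the last one in \<open>W\<close>.\<close>
primrec covered :: "nat \<Rightarrow> nat set \<Rightarrow> bool" where
  "covered 0 S = (S \<subseteq> W)"
| "covered (Suc t) S = (nbhd G S \<subseteq> W0 \<and> covered t (nbhd G S))"

lemma nbhd_image: "S \<subseteq> W0 \<Longrightarrow> nbhd G' (\<phi> ` S) = \<phi> ` nbhd G S"
  by (auto simp: nbhd_def nbrs_image subset_eq)

lemma card_nbrs_image: "v \<in> W0 \<Longrightarrow> card (nbrs G' (\<phi> v)) = card (nbrs G v)"
  using nbrs_image[of v] nbrs_in[of v] inj by (simp add: card_image inj_on_subset)

lemma arr_rate_relabel:
  assumes i: "i \<in> W0" "nbrs G i \<subseteq> W0" and A: "insert i (nbrs G i) \<subseteq> A" "A \<subseteq> W"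
  shows "arr_rate l G' (restrict (a \<circ> \<psi>) (\<phi> ` A)) (\<phi> i) = arr_rate l G a i"
proof -
  have "(\<Sum>j\<in>nbrs G' (\<phi> i). of_bool (restrict (a \<circ> \<psi>) (\<phi> ` A) j) / real (card (nbrs G' j))) =
      (\<Sum>j\<in>nbrs G i. of_bool (restrict (a \<circ> \<psi>) (\<phi> ` A) (\<phi> j)) / real (card (nbrs G' (\<phi> j))))"
    using inj nbrs_in[OF i(1)] by (simp add: nbrs_image[OF i(1)] sum.reindex inj_on_subset)
  also have "\<dots> = (\<Sum>j\<in>nbrs G i. of_bool (a j) / real (card (nbrs G j)))"
    using i A by (intro sum.cong refl) (auto simp: card_nbrs_image \<psi>_\<phi> subset_eq)
  finally show ?thesis
    using i A interior by (auto simp: arr_rate_def \<psi>_\<phi>)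
qed

lemma Pi_pmf_relabel:
  assumes "finite S" "S \<subseteq> W"
  shows "Pi_pmf (\<phi> ` S) undefined (\<lambda>j. q (\<psi> j)) = map_pmf (\<lambda>a. restrict (a \<circ> \<psi>) (\<phi> ` S)) (Pi_pmf S undefined q)"
  using assms inj \<psi>_\<phi> by (intro Pi_pmf_reindex) (auto intro: inj_on_subset)

context
  fixes B :: nat and al dt :: real and lam :: "'s::countable \<Rightarrow> real" and P :: "'s \<Rightarrow> 's pmf"
    and l0 :: "'s pmf" and pol :: "nat \<Rightarrow> nat \<Rightarrow> real"
begin

lemma local_step_relabel:
  assumes S: "finite S" "nbhd G S \<subseteq> W0" and fin: "\<And>i. i \<in> S \<Longrightarrow> finite (nbrs G i)"
  shows "local_step B al dt lam P pol G' t (\<phi> ` S) (relabel (\<phi> ` nbhd G S) x) =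
    map_pmf (relabel (\<phi> ` S)) (local_step B al dt lam P pol G t S x)"
proof -
  have S_W0: "S \<subseteq> W0" using S subset_nbhd[of S G] by auto
  have nbhd_W: "nbhd G S \<subseteq> W" using S interior by auto
  have "Pi_pmf (nbhd G' (\<phi> ` S)) undefined (\<lambda>j. bernoulli_pmf (pol t (snd (relabel (\<phi> ` nbhd G S) x) j))) =
      Pi_pmf (\<phi> ` nbhd G S) undefined (\<lambda>j. bernoulli_pmf (pol t (snd x (\<psi> j))))"
    using nbhd_image[OF S_W0] by (intro Pi_pmf_cong) (auto simp: relabel_def)
  also have "\<dots> = map_pmf (\<lambda>a. restrict (a \<circ> \<psi>) (\<phi> ` nbhd G S)) (Pi_pmf (nbhd G S) undefined (\<lambda>j. bernoulli_pmf (pol t (snd x j))))"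
    by (rule Pi_pmf_relabel[OF finite_nbhd[OF S(1) fin] nbhd_W])
  finally have actions: "Pi_pmf (nbhd G' (\<phi> ` S)) undefined (\<lambda>j. bernoulli_pmf (pol t (snd (relabel (\<phi> ` nbhd G S) x) j))) =
     map_pmf (\<lambda>a. restrict (a \<circ> \<psi>) (\<phi> ` nbhd G S)) (Pi_pmf (nbhd G S) undefined (\<lambda>j. bernoulli_pmf (pol t (snd x j))))" .
  have "Pi_pmf (\<phi> ` S) undefined (\<lambda>i. bd_pmf B (arr_rate (lam (fst (relabel (\<phi> ` nbhd G S) x))) G'
        (restrict (a \<circ> \<psi>) (\<phi> ` nbhd G S)) i) al dt (snd (relabel (\<phi> ` nbhd G S) x) i)) =
      Pi_pmf (\<phi> ` S) undefined (\<lambda>i. bd_pmf B (arr_rate (lam (fst x)) G a (\<psi> i)) al dt (snd x (\<psi> i)))" for a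
  proof (intro Pi_pmf_cong refl)
    fix i' assume "i' \<in> \<phi> ` S"
    then obtain i where i: "i \<in> S" "i' = \<phi> i" by auto
    have "nbrs G i \<subseteq> W0" "insert i (nbrs G i) \<subseteq> nbhd G S" using i S by (auto simp: nbhd_def)
    then have "arr_rate (lam (fst x)) G' (restrict (a \<circ> \<psi>) (\<phi> ` nbhd G S)) (\<phi> i) = arr_rate (lam (fst x)) G a i"
      using i S_W0 nbhd_W by (intro arr_rate_relabel) auto
    moreover have "\<phi> i \<in> \<phi> ` nbhd G S" using i subset_nbhd[of S G] by auto
    ultimately show "bd_pmf B (arr_rate (lam (fst (relabel (\<phi> ` nbhd G S) x))) G' (restrict (a \<circ> \<psi>) (\<phi> ` nbhd G S)) i') al dt
        (snd (relabel (\<phi> ` nbhd G S) x) i') = bd_pmf B (arr_rate (lam (fst x)) G a (\<psi> i')) al dt (snd x (\<psi> i'))"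
      using i nbhd_W subset_nbhd[of S G] \<psi>_\<phi>[of i] by (auto simp: relabel_def)
  qed
  also have "Pi_pmf (\<phi> ` S) undefined (\<lambda>i. bd_pmf B (arr_rate (lam (fst x)) G a (\<psi> i)) al dt (snd x (\<psi> i))) =
      map_pmf (\<lambda>a. restrict (a \<circ> \<psi>) (\<phi> ` S)) (Pi_pmf S undefined (\<lambda>i. bd_pmf B (arr_rate (lam (fst x)) G a i) al dt (snd x i)))"
    for a by (rule Pi_pmf_relabel[OF S(1) order.trans[OF S_W0 interior]])
  finally have queues: "Pi_pmf (\<phi> ` S) undefined (\<lambda>i. bd_pmf B (arr_rate (lam (fst (relabel (\<phi> ` nbhd G S) x))) G'
        (restrict (a \<circ> \<psi>) (\<phi> ` nbhd G S)) i) al dt (snd (relabel (\<phi> ` nbhd G S) x) i)) =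
     map_pmf (\<lambda>a. restrict (a \<circ> \<psi>) (\<phi> ` S)) (Pi_pmf S undefined (\<lambda>i. bd_pmf B (arr_rate (lam (fst x)) G a i) al dt (snd x i)))"
    for a .
  show ?thesis
    unfolding local_step_def actions bind_map_pmf queues map_bind_pmf map_pmf_comp
    by (simp add: relabel_def)
qed

lemma local_state_dist_relabel:
  assumes fin: "\<And>i. finite (nbrs G i)"
  shows "finite S \<Longrightarrow> covered t S \<Longrightarrow>
    local_state_dist B al dt lam P l0 pol (G', z') t (\<phi> ` S) =
    map_pmf (relabel (\<phi> ` S)) (local_state_dist B al dt lam P l0 pol (G, z) t S)"
proof (induction t arbitrary: S)
  case 0
  then show ?case
    by (auto simp: map_pmf_comp relabel_def fun_eq_iff restrict_def marks \<psi>_\<phi> subset_eq intro!: map_pmf_cong)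
next
  case (Suc t)
  then have "nbhd G S \<subseteq> W0" "covered t (nbhd G S)" by auto
  moreover have "S \<subseteq> W0" using calculation(1) subset_nbhd[of S G] by auto
  moreover have "finite (nbhd G S)" using Suc.prems fin by (intro finite_nbhd) auto
  ultimately show ?case
    using Suc.IH nbhd_image
    by (simp add: bind_map_pmf map_bind_pmf local_step_relabel[OF Suc.prems(1) _ fin])
qed

lemma local_drops_relabel:
  assumes i: "nbhd G {i} \<subseteq> W0" and fin: "finite (nbrs G i)"
  shows "local_drops B al dt lam pol G' t (\<phi> i) (relabel (\<phi> ` nbhd G {i}) x) = local_drops B al dt lam pol G t i x"
proof -
  have i_W0: "{i} \<subseteq> W0" "i \<in> W0" "nbrs G i \<subseteq> W0" using i by (auto simp: nbhd_def)
  have nbhd_W: "nbhd G {i} \<subseteq> W" using i interior by auto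
  have "Pi_pmf (nbhd G' {\<phi> i}) undefined (\<lambda>j. bernoulli_pmf (pol t (snd (relabel (\<phi> ` nbhd G {i}) x) j))) =
      Pi_pmf (\<phi> ` nbhd G {i}) undefined (\<lambda>j. bernoulli_pmf (pol t (snd x (\<psi> j))))"
    using nbhd_image[OF i_W0(1)] by (intro Pi_pmf_cong) (auto simp: relabel_def)
  also have "\<dots> = map_pmf (\<lambda>a. restrict (a \<circ> \<psi>) (\<phi> ` nbhd G {i})) (Pi_pmf (nbhd G {i}) undefined (\<lambda>j. bernoulli_pmf (pol t (snd x j))))"
    using fin by (intro Pi_pmf_relabel[OF _ nbhd_W] finite_nbhd) auto
  finally have actions: "Pi_pmf (nbhd G' {\<phi> i}) undefined (\<lambda>j. bernoulli_pmf (pol t (snd (relabel (\<phi> ` nbhd G {i}) x) j))) =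
     map_pmf (\<lambda>a. restrict (a \<circ> \<psi>) (\<phi> ` nbhd G {i})) (Pi_pmf (nbhd G {i}) undefined (\<lambda>j. bernoulli_pmf (pol t (snd x j))))" .
  have "arr_rate l G' (restrict (a \<circ> \<psi>) (\<phi> ` nbhd G {i})) (\<phi> i) = arr_rate l G a i" for l a
    using i_W0 nbhd_W by (intro arr_rate_relabel) (auto simp: nbhd_def)
  moreover have "snd (relabel (\<phi> ` nbhd G {i}) x) (\<phi> i) = snd x i"
    using \<psi>_\<phi>[of i] nbhd_W by (auto simp: relabel_def nbhd_def)
  ultimately show ?thesis
    unfolding local_drops_def actions integral_map_pmf by (simp add: relabel_def)
qed

lemma exp_drops_relabel:
  assumes fin: "\<And>i. finite (nbrs G i)" and fin': "\<And>i. finite (nbrs G' i)"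
    and r: "r \<in> verts G" "\<phi> r \<in> verts G'" and cov: "covered t (nbhd G {r})" and r_W0: "nbhd G {r} \<subseteq> W0"
  shows "exp_drops B al dt lam P l0 pol (G', z') (\<phi> r) t = exp_drops B al dt lam P l0 pol (G, z) r t"
proof -
  have "exp_drops B al dt lam P l0 pol (G', z') (\<phi> r) t =
      measure_pmf.expectation (local_state_dist B al dt lam P l0 pol (G', z') t (nbhd G' {\<phi> r}))
        (local_drops B al dt lam pol G' t (\<phi> r))"
    using exp_drops_eq_local[where g="(G', z')"] fin' r by simp
  also have "nbhd G' {\<phi> r} = \<phi> ` nbhd G {r}"
    using nbhd_image[of "{r}"] r_W0 by (simp add: nbhd_def)
  also have "measure_pmf.expectation (local_state_dist B al dt lam P l0 pol (G', z') t (\<phi> ` nbhd G {r}))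
      (local_drops B al dt lam pol G' t (\<phi> r)) =
    measure_pmf.expectation (local_state_dist B al dt lam P l0 pol (G, z) t (nbhd G {r}))
      (local_drops B al dt lam pol G t r)"
    using fin
    by (simp add: local_state_dist_relabel[OF fin finite_nbhd cov] local_drops_relabel[OF r_W0])
  also have "\<dots> = exp_drops B al dt lam P l0 pol (G, z) r t"
    by (subst exp_drops_eq_local[where g="(G, z)"]) (use fin r in auto)
  finally show ?thesis .
qed

end

end

lemma rg_iso_ballE:
  assumes wf: "wf_graph G" "wf_graph G'" and r: "r \<in> verts G" "r' \<in> verts G'"
    and iso: "rg_iso (ball k ((G, z), r)) (ball k ((G', z'), r'))"
  obtains \<phi> where "bij_betw \<phi> (ballset G k r) (ballset G' k r')" "\<phi> r = r'"
    "\<And>i j. i \<in> ballset G k r \<Longrightarrow> j \<in> ballset G k r \<Longrightarrow> adj G i j \<longleftrightarrow> adj G' (\<phi> i) (\<phi> j)"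
    "\<And>i. i \<in> ballset G k r \<Longrightarrow> z i = z' (\<phi> i)"
proof -
  let ?W = "ballset G k r" and ?W' = "ballset G' k r'"
  have W: "verts G \<inter> ?W = ?W" "verts G' \<inter> ?W' = ?W'"
    using ballset_subset_verts[OF wf(1) r(1)] ballset_subset_verts[OF wf(2) r(2)] by auto
  from iso obtain \<phi> where bij: "bij_betw \<phi> ?W ?W'" and "\<phi> r = r'"
    and adj: "\<forall>i\<in>?W. \<forall>j\<in>?W. (adj G i j \<and> i \<in> ?W \<and> j \<in> ?W) \<longleftrightarrow> (adj G' (\<phi> i) (\<phi> j) \<and> \<phi> i \<in> ?W' \<and> \<phi> j \<in> ?W')"
    and "\<forall>i\<in>?W. z i = z' (\<phi> i)"
    unfolding rg_iso_def ball_def by (auto simp: W)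
  moreover have "\<phi> i \<in> ?W'" if "i \<in> ?W" for i using bij that by (auto simp: bij_betw_def)
  ultimately show ?thesis using that by auto
qed

lemma ballset_image_subset:
  assumes root: "\<phi> r = r'"
    and adj: "\<And>i j. i \<in> ballset G k r \<Longrightarrow> j \<in> ballset G k r \<Longrightarrow> adj G i j \<longleftrightarrow> adj G' (\<phi> i) (\<phi> j)"
  shows "j \<le> k \<Longrightarrow> \<phi> ` ballset G j r \<subseteq> ballset G' j r'"
proof (induction j)
  case (Suc j)
  have "\<phi> l \<in> ballset G' (Suc j) r'" if l: "l \<in> ballset G (Suc j) r" for l
  proof (cases "l \<in> ballset G j r")
    case True
    then show ?thesis using Suc ballset_subset_Suc[of G' j r'] by auto
  next
    case False
    then obtain v where v: "v \<in> ballset G j r" "adj G v l" using l by (auto simp: ballset.simps(2))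
    have "v \<in> ballset G k r" "l \<in> ballset G k r"
      using v l ballset_mono[OF Suc.prems, of G r] ballset_subset_Suc[of G j r] by auto
    then have "adj G' (\<phi> v) (\<phi> l)" using adj v by auto
    moreover have "\<phi> v \<in> ballset G' j r'" using Suc v by auto
    ultimately show ?thesis by (auto simp: ballset.simps(2))
  qed
  then show ?case by auto
qed (use root in simp)

lemma rg_iso_ball_partial_iso:
  assumes wf: "wf_graph G" "wf_graph G'" and r: "r \<in> verts G" "r' \<in> verts G'"
    and iso: "rg_iso (ball (Suc k) ((G, z), r)) (ball (Suc k) ((G', z'), r'))"
  obtains \<phi> where "partial_iso G G' z z' \<phi> (ballset G (Suc k) r) (ballset G k r)" "\<phi> r = r'"
proof -
  let ?W = "ballset G (Suc k) r" and ?W' = "ballset G' (Suc k) r'"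
  obtain \<phi> where bij: "bij_betw \<phi> ?W ?W'" and root: "\<phi> r = r'"
    and adj: "\<And>i j. i \<in> ?W \<Longrightarrow> j \<in> ?W \<Longrightarrow> adj G i j \<longleftrightarrow> adj G' (\<phi> i) (\<phi> j)"
    and marks: "\<And>i. i \<in> ?W \<Longrightarrow> z i = z' (\<phi> i)"
    using rg_iso_ballE[OF wf r iso] by blast
  have "partial_iso G G' z z' \<phi> ?W (ballset G k r)"
  proof
    show "inj_on \<phi> ?W" using bij by (simp add: bij_betw_def)
    show "ballset G k r \<subseteq> ?W" by (rule ballset_subset_Suc)
    fix v
    show "v \<in> ballset G k r \<Longrightarrow> nbrs G v \<subseteq> ?W" by (rule nbrs_subset_ballset_Suc)
    show "v \<in> ?W \<Longrightarrow> z' (\<phi> v) = z v" using marks by simp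
    assume v: "v \<in> ballset G k r"
    then have v_W: "v \<in> ?W" using ballset_subset_Suc by blast
    have "\<phi> ` ballset G k r \<subseteq> ballset G' k r'"
      by (rule ballset_image_subset[where k="Suc k"]) (use root adj in auto)
    then have "nbrs G' (\<phi> v) \<subseteq> ?W'"
      using v by (intro nbrs_subset_ballset_Suc) auto
    then have "nbrs G' (\<phi> v) \<subseteq> \<phi> ` ?W" using bij by (simp add: bij_betw_def)
    moreover have "\<phi> w \<in> nbrs G' (\<phi> v) \<longleftrightarrow> w \<in> nbrs G v" if "w \<in> ?W" for w
    proof -
      have "\<phi> w \<in> ?W'" using bij that by (auto simp: bij_betw_def)
      then show ?thesis
        using adj[OF v_W that] that ballset_subset_verts[OF wf(1) r(1)] ballset_subset_verts[OF wf(2) r(2)]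
        by (auto simp: nbrs_def)
    qed
    moreover have "nbrs G v \<subseteq> ?W" using v by (rule nbrs_subset_ballset_Suc)
    ultimately show "nbrs G' (\<phi> v) = \<phi> ` nbrs G v" by blast
  qed
  then show ?thesis using that root by blast
qed

lemma (in partial_iso) covered_ballset:
  assumes "ballset G (Suc k) r \<subseteq> W" "ballset G k r \<subseteq> W0" "wf_graph G"
  shows "m + t + 1 \<le> Suc k \<Longrightarrow> covered t (ballset G m r)"
proof (induction t arbitrary: m)
  case 0
  then show ?case using assms(1) ballset_mono[of m "Suc k" G r] by simp
next
  case (Suc t)
  then show ?case
    using assms(2) Suc.IH[of "Suc m"] ballset_mono[of "Suc m" k G r] by (simp add: nbhd_ballset[OF assms(3)])
qed

text \<open>The drops at the root during epoch \<open>t\<close> are determined by the \<open>(t + 2)\<close>-ball: the marks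
  in the \<open>(t + 1)\<close>-ball, plus the degrees of its nodes, which enter the arrival rates.\<close>
lemma exp_drops_ball_invariant:
  fixes lam :: "'s::countable \<Rightarrow> real"
  assumes wf: "wf_graph G" "wf_graph G'"
    and fin: "\<And>i. i \<in> verts G \<Longrightarrow> finite (nbrs G i)" "\<And>i. i \<in> verts G' \<Longrightarrow> finite (nbrs G' i)"
    and r: "r \<in> verts G" "r' \<in> verts G'"
    and iso: "rg_iso (ball (Suc k) ((G, z), r)) (ball (Suc k) ((G', z'), r'))" and "t + 2 \<le> Suc k"
  shows "exp_drops B al dt lam P l0 pol (G', z') r' t = exp_drops B al dt lam P l0 pol (G, z) r t"
proof -
  obtain \<phi> where "partial_iso G G' z z' \<phi> (ballset G (Suc k) r) (ballset G k r)" and root: "\<phi> r = r'"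
    using rg_iso_ball_partial_iso[OF wf r iso] by blast
  then interpret partial_iso G G' z z' \<phi> "ballset G (Suc k) r" "ballset G k r" by simp
  have nbhd_r: "nbhd G {r} = ballset G 1 r" using nbhd_ballset[OF wf(1), of 0 r] by simp
  have "covered t (nbhd G {r})"
    unfolding nbhd_r using \<open>t + 2 \<le> Suc k\<close> by (intro covered_ballset[OF order.refl order.refl wf(1)]) simp
  moreover have "nbhd G {r} \<subseteq> ballset G k r"
    unfolding nbhd_r using \<open>t + 2 \<le> Suc k\<close> by (intro ballset_mono) simp
  ultimately show ?thesis
    using exp_drops_relabel[OF finite_nbrs[OF wf(1) fin(1)] finite_nbrs[OF wf(2) fin(2)], where r=r] root r by simp
qed

lemma card_nbrs_ball_invariant:
  assumes wf: "wf_graph G" "wf_graph G'" and r: "r \<in> verts G" "r' \<in> verts G'"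
    and iso: "rg_iso (ball (Suc k) ((G, z), r)) (ball (Suc k) ((G', z'), r'))"
  shows "card (nbrs G' r') = card (nbrs G r)"
proof -
  obtain \<phi> where "partial_iso G G' z z' \<phi> (ballset G (Suc k) r) (ballset G k r)" and root: "\<phi> r = r'"
    using rg_iso_ball_partial_iso[OF wf r iso] by blast
  then show ?thesis using partial_iso.card_nbrs_image root root_in_ballset by fastforce
qed

lemma exp_drops_component:
  fixes lam :: "'s::countable \<Rightarrow> real"
  assumes wf: "wf_graph G" and fin: "\<And>i. i \<in> verts G \<Longrightarrow> finite (nbrs G i)" and i: "i \<in> verts G"
  shows "exp_drops B al dt lam P l0 pol (induced G (comp_set G i), z) i t = exp_drops B al dt lam P l0 pol (G, z) i t"
proof -
  let ?C = "comp_set G i"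
  let ?G = "induced G ?C"
  interpret partial_iso G ?G z z id ?C ?C
    by unfold_locales (auto simp: nbrs_def nbrs_induced_comp_set[symmetric] intro: comp_set_adj_closed)
  have covered: "S \<subseteq> ?C \<Longrightarrow> covered t S" for S
  proof (induction t arbitrary: S)
    case (Suc t)
    then have "nbhd G S \<subseteq> ?C" by (auto simp: nbhd_def nbrs_def intro: comp_set_adj_closed)
    then show ?case using Suc.IH by simp
  qed simp
  have "finite (nbrs ?G v)" for v
    using finite_nbrs[OF wf fin] by (rule finite_subset[rotated]) (auto simp: nbrs_def)
  moreover have "nbhd G {i} \<subseteq> ?C"
    using root_in_comp_set[of i G] by (auto simp: nbhd_def nbrs_def intro: comp_set_adj_closed)
  ultimately show ?thesis
    using exp_drops_relabel[OF finite_nbrs[OF wf fin], where r=i] covered[of "nbhd G {i}"] i root_in_comp_set[of i G]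
    by simp
qed

section \<open>A uniform bound on the expected drops\<close>

lemma abs_qgen_le: "0 \<le> r \<Longrightarrow> 0 \<le> al \<Longrightarrow> \<bar>qgen B r al x y\<bar> \<le> r + al"
  unfolding qgen_def by auto

lemma abs_qpow_le:
  assumes "0 \<le> r" "0 \<le> al"
  shows "\<bar>qpow B r al k x y\<bar> \<le> (real (Suc B) * (r + al)) ^ k"
proof (induction k arbitrary: y)
  case (Suc k)
  have "\<bar>qpow B r al (Suc k) x y\<bar> \<le> (\<Sum>w\<le>B. \<bar>qpow B r al k x w\<bar> * \<bar>qgen B r al w y\<bar>)"
    by (simp add: sum_abs[THEN order_trans] abs_mult)
  also have "\<dots> \<le> (\<Sum>w\<le>B. (real (Suc B) * (r + al)) ^ k * (r + al))"
    using assms by (intro sum_mono mult_mono Suc.IH abs_qgen_le) auto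
  also have "\<dots> = (real (Suc B) * (r + al)) ^ Suc k" by (simp add: algebra_simps)
  finally show ?case .
qed simp

text \<open>Entrywise, \<open>exp (s Q)\<close> is dominated by \<open>exp (s \<parallel>Q\<parallel>)\<close> for the crude norm
  \<open>\<parallel>Q\<parallel> = (B + 1) (r + al)\<close>.\<close>
lemma abs_bd_trans_le:
  assumes "0 \<le> r" "0 \<le> al" "0 \<le> s"
  shows "\<bar>bd_trans B r al s x y\<bar> \<le> exp (s * (real (Suc B) * (r + al)))"
proof -
  define c where "c = real (Suc B) * (r + al)"
  have exp_sums: "(\<lambda>k. (s * c) ^ k / fact k) sums exp (s * c)"
    using exp_converges[of "s * c"] by (simp add: divide_inverse mult.commute)
  have le: "\<bar>s ^ k / fact k * qpow B r al k x y\<bar> \<le> (s * c) ^ k / fact k" for k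
  proof -
    have "\<bar>s ^ k / fact k * qpow B r al k x y\<bar> = s ^ k / fact k * \<bar>qpow B r al k x y\<bar>"
      using assms by (simp add: abs_mult)
    also have "\<dots> \<le> s ^ k / fact k * c ^ k"
      using abs_qpow_le[OF assms(1,2)] assms by (intro mult_left_mono) (auto simp: c_def)
    finally show ?thesis by (simp add: power_mult_distrib)
  qed
  have abs_summable: "summable (\<lambda>k. \<bar>s ^ k / fact k * qpow B r al k x y\<bar>)"
    using le exp_sums by (intro summable_rabs_comparison_test[of _ "\<lambda>k. (s * c) ^ k / fact k"]) (auto simp: sums_iff)
  have "\<bar>bd_trans B r al s x y\<bar> \<le> (\<Sum>k. \<bar>s ^ k / fact k * qpow B r al k x y\<bar>)"
    unfolding bd_trans_def by (rule summable_rabs[OF abs_summable])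
  also have "\<dots> \<le> (\<Sum>k. (s * c) ^ k / fact k)"
    using le exp_sums abs_summable by (intro suminf_le) (auto simp: sums_iff)
  also have "\<dots> = exp (s * c)"
    using exp_sums by (simp add: sums_iff)
  finally show ?thesis by (simp add: c_def)
qed

definition drops_bound :: "nat \<Rightarrow> real \<Rightarrow> real \<Rightarrow> real \<Rightarrow> real" where
  "drops_bound B r al dt = r * (dt * exp (dt * (real (Suc B) * (r + al))))"

lemma abs_drops_le:
  assumes "0 \<le> r" "0 \<le> al" "0 \<le> dt"
  shows "\<bar>drops B r al dt x\<bar> \<le> drops_bound B r al dt"
proof -
  define E where "E = exp (dt * (real (Suc B) * (r + al)))"
  have "\<bar>integral {0..dt} (\<lambda>s. bd_trans B r al s x B)\<bar> \<le> dt * E"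
  proof (cases "(\<lambda>s. bd_trans B r al s x B) integrable_on {0..dt}")
    case True
    have "norm (integral {0..dt} (\<lambda>s. bd_trans B r al s x B)) \<le> E * measure lborel (cbox 0 dt)"
    proof (rule has_integral_bound)
      show "((\<lambda>s. bd_trans B r al s x B) has_integral integral {0..dt} (\<lambda>s. bd_trans B r al s x B)) (cbox 0 dt)"
        using True by (simp add: has_integral_integral)
      fix s :: real assume "s \<in> cbox 0 dt"
      then have s: "0 \<le> s" "s \<le> dt" by auto
      have "\<bar>bd_trans B r al s x B\<bar> \<le> exp (s * (real (Suc B) * (r + al)))"
        using abs_bd_trans_le assms s by auto
      also have "\<dots> \<le> E" unfolding E_def using s assms by (intro exp_mono mult_right_mono) auto
      finally show "norm (bd_trans B r al s x B) \<le> E" by simp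
    qed (simp add: E_def)
    then show ?thesis using assms by (simp add: mult.commute)
  next
    case False
    then show ?thesis using assms by (simp add: not_integrable_integral E_def)
  qed
  then show ?thesis using assms
    by (simp add: drops_def drops_bound_def abs_mult E_def mult_left_mono)
qed

lemma drops_bound_mono:
  "0 \<le> r \<Longrightarrow> r \<le> r' \<Longrightarrow> 0 \<le> al \<Longrightarrow> 0 \<le> dt \<Longrightarrow> drops_bound B r al dt \<le> drops_bound B r' al dt"
  unfolding drops_bound_def by (intro mult_mono mult_left_mono exp_mono) auto

lemma drops_bound_nonneg: "0 \<le> r \<Longrightarrow> 0 \<le> dt \<Longrightarrow> 0 \<le> drops_bound B r al dt"
  unfolding drops_bound_def by simp

lemma arr_rate_nonneg: "0 \<le> l \<Longrightarrow> 0 \<le> arr_rate l G a i"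
  unfolding arr_rate_def by (intro mult_nonneg_nonneg add_nonneg_nonneg sum_nonneg) auto

lemma arr_rate_le: "0 \<le> l \<Longrightarrow> arr_rate l G a i \<le> l * (1 + real (card (nbrs G i)))"
proof -
  assume "0 \<le> l"
  have "of_bool (a j) / real (card (nbrs G j)) \<le> (1::real)" for j
    by (cases "card (nbrs G j) = 0") (auto simp: divide_le_eq)
  then have "(\<Sum>j\<in>nbrs G i. of_bool (a j) / real (card (nbrs G j))) \<le> real (card (nbrs G i)) * 1"
    by (intro sum_bounded_above)
  then show ?thesis unfolding arr_rate_def using \<open>0 \<le> l\<close> by (intro mult_left_mono) auto
qed

lemma abs_exp_drops_le:
  fixes lam :: "'s::countable \<Rightarrow> real"
  assumes fin: "\<And>i. i \<in> verts (fst g) \<Longrightarrow> finite (nbrs (fst g) i)" and i: "i \<in> verts (fst g)"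
    and "0 \<le> al" "0 \<le> dt" and lam: "\<And>s. 0 \<le> lam s" "\<And>s. lam s \<le> L"
  shows "\<bar>exp_drops B al dt lam P l0 pol g i t\<bar> \<le> drops_bound B (L * (1 + real (card (nbrs (fst g) i)))) al dt"
proof -
  let ?C = "drops_bound B (L * (1 + real (card (nbrs (fst g) i)))) al dt"
  have "\<bar>drops B (arr_rate (lam (fst x)) (fst g) a i) al dt (snd x i)\<bar> \<le> ?C" for x a
  proof -
    let ?r = "arr_rate (lam (fst x)) (fst g) a i"
    have r: "0 \<le> ?r" by (rule arr_rate_nonneg[OF lam(1)])
    have "?r \<le> lam (fst x) * (1 + real (card (nbrs (fst g) i)))" by (rule arr_rate_le[OF lam(1)])
    also have "\<dots> \<le> L * (1 + real (card (nbrs (fst g) i)))" by (intro mult_right_mono lam(2)) auto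
    finally have "drops_bound B ?r al dt \<le> ?C" by (intro drops_bound_mono r assms(3,4))
    then show ?thesis using abs_drops_le[OF r assms(3,4)] by (rule order_trans[rotated])
  qed
  then have "\<bar>local_drops B al dt lam pol (fst g) t i x\<bar> \<le> ?C" for x
    unfolding local_drops_def by (rule measure_pmf.abs_integral_le_const)
  then have "\<bar>measure_pmf.expectation (local_state_dist B al dt lam P l0 pol g t (nbhd (fst g) {i}))
      (local_drops B al dt lam pol (fst g) t i)\<bar> \<le> ?C"
    by (rule measure_pmf.abs_integral_le_const)
  then show ?thesis
    by (simp only: exp_drops_eq_local[OF fin i])
qed


section \<open>Local weak convergence and functions determined by balls\<close>

definition ball_invariant :: "nat \<Rightarrow> nat \<Rightarrow> (rgraph \<Rightarrow> real) \<Rightarrow> bool" where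
  "ball_invariant B k F \<longleftrightarrow>
     (\<forall>g h. in_Gstar B g \<longrightarrow> in_Gstar B h \<longrightarrow> rg_iso (ball k g) (ball k h) \<longrightarrow> F g = F h)"

text \<open>The \<open>k\<close>-ball with its labels kept; it takes countably many values on \<open>G\<^sub>*\<close>.\<close>
definition ball_code :: "nat \<Rightarrow> rgraph \<Rightarrow> nat set \<times> (nat \<times> nat) set \<times> (nat \<Rightarrow> nat) \<times> nat" where
  "ball_code k g = (let G = fst (fst g); W = ballset G k (snd g) in
     (W, {(i, j). adj G i j \<and> i \<in> W \<and> j \<in> W}, restrict (snd (fst g)) W, snd g))"

lemma in_GstarD:
  assumes "in_Gstar B g"
  shows "wf_graph (fst (fst g))" "snd g \<in> verts (fst (fst g))"
    "\<And>i. i \<in> verts (fst (fst g)) \<Longrightarrow> finite (nbrs (fst (fst g)) i)"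
  using assms by (auto simp: in_Gstar_def)

lemma rg_iso_ball_if_ball_code_eq:
  assumes g: "in_Gstar B g" and h: "in_Gstar B h" and code: "ball_code k g = ball_code k h"
  shows "rg_iso (ball k g) (ball k h)"
proof -
  let ?G = "fst (fst g)" and ?H = "fst (fst h)"
  let ?W = "ballset ?G k (snd g)" and ?W' = "ballset ?H k (snd h)"
  have W: "?W \<subseteq> verts ?G" "?W' \<subseteq> verts ?H"
    using ballset_subset_verts in_GstarD[OF g] in_GstarD[OF h] by auto
  have "?W = ?W'" and edges: "{(i, j). adj ?G i j \<and> i \<in> ?W \<and> j \<in> ?W} = {(i, j). adj ?H i j \<and> i \<in> ?W' \<and> j \<in> ?W'}"
    and marks: "restrict (snd (fst g)) ?W = restrict (snd (fst h)) ?W'" and "snd g = snd h"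
    using code unfolding ball_code_def Let_def prod.inject by auto
  moreover have "adj ?G i j \<longleftrightarrow> adj ?H i j" if "i \<in> ?W" "j \<in> ?W" for i j
    using edges that \<open>?W = ?W'\<close> by (auto simp: set_eq_iff)
  moreover have "snd (fst g) i = snd (fst h) i" if "i \<in> ?W" for i
    using marks that \<open>?W = ?W'\<close> by (metis restrict_apply')
  ultimately show ?thesis
    unfolding rg_iso_def ball_def
    by (intro exI[of _ id]) (use W in \<open>auto simp: bij_betw_def Int_absorb1\<close>)
qed

lemma countable_ball_code_image: "countable (ball_code k ` Gstar B)"
proof (rule countable_subset)
  show "ball_code k ` Gstar B \<subseteq>
      (SIGMA W:{W. finite W}. SIGMA E:Pow (W \<times> W). SIGMA m:PiE W (\<lambda>_. UNIV). UNIV)"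
    using finite_ballset in_GstarD by (fastforce simp: Gstar_def ball_code_def Let_def)
  show "countable (SIGMA W:{W :: nat set. finite W}. SIGMA E:Pow (W \<times> W). SIGMA m:PiE W (\<lambda>_. UNIV :: nat set). (UNIV :: nat set))"
    by (intro countable_SIGMA countable_Collect_finite countable_PiE countableI_type countable_finite) auto
qed

text \<open>Each level set of \<open>F\<close> is a countable union of cylinder events, one for each ball code.\<close>
lemma ball_invariant_measurable:
  assumes inv: "ball_invariant B k F" and space: "space M = Gstar B" and sets: "sets M = lw_sets B"
  shows "F \<in> borel_measurable M"
proof (rule borel_measurableI)
  define rep where "rep = (\<lambda>c. SOME g. in_Gstar B g \<and> ball_code k g = c)"
  have rep: "in_Gstar B (rep (ball_code k g)) \<and> ball_code k (rep (ball_code k g)) = ball_code k g"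
    if "in_Gstar B g" for g
    unfolding rep_def by (rule someI[of _ g]) (use that in simp)
  define R where "R = rep ` ball_code k ` Gstar B"
  have R: "in_Gstar B H" if "H \<in> R" for H using that rep by (auto simp: R_def Gstar_def)
  fix A :: "real set"
  have "F -` A \<inter> space M = (\<Union>H\<in>{H \<in> R. F H \<in> A}. {g \<in> Gstar B. rg_iso (ball k g) (ball k H)})"
  proof (intro set_eqI iffI)
    fix g assume "g \<in> F -` A \<inter> space M"
    then have g: "in_Gstar B g" "F g \<in> A" using space by (auto simp: Gstar_def)
    let ?H = "rep (ball_code k g)"
    have iso: "rg_iso (ball k g) (ball k ?H)"
      using rep[OF g(1)] by (intro rg_iso_ball_if_ball_code_eq[OF g(1)]) auto
    then have "F ?H = F g" using inv g(1) rep[OF g(1)] unfolding ball_invariant_def by metis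
    then show "g \<in> (\<Union>H\<in>{H \<in> R. F H \<in> A}. {g \<in> Gstar B. rg_iso (ball k g) (ball k H)})"
      using g iso by (intro UN_I[of ?H]) (auto simp: R_def Gstar_def)
  next
    fix g assume "g \<in> (\<Union>H\<in>{H \<in> R. F H \<in> A}. {g \<in> Gstar B. rg_iso (ball k g) (ball k H)})"
    then obtain H where "H \<in> R" "F H \<in> A" "in_Gstar B g" "rg_iso (ball k g) (ball k H)"
      by (auto simp: Gstar_def)
    moreover from this have "F g = F H"
      using inv R unfolding ball_invariant_def by blast
    ultimately show "g \<in> F -` A \<inter> space M"
      using space by (auto simp: Gstar_def)
  qed
  also have "\<dots> \<in> sets M"
  proof (rule sets.countable_UN'')
    show "countable {H \<in> R. F H \<in> A}"
      unfolding R_def by (rule countable_subset[OF _ countable_image[OF countable_ball_code_image]]) auto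
    fix H
    show "{g \<in> Gstar B. rg_iso (ball k g) (ball k H)} \<in> sets M"
      unfolding sets lw_sets_def by (rule sigma_sets.Basic) blast
  qed
  finally show "F -` A \<inter> space M \<in> sets M" .
qed

lemma ball_invariant_tendsto:
  assumes "ball_invariant B k F" "\<And>n. in_Gstar B (seq n)" "in_Gstar B g" "lw_converges seq g"
  shows "(\<lambda>n. F (seq n)) \<longlonglongrightarrow> F g"
proof (rule tendsto_eventually)
  obtain n0 where "\<forall>n>n0. rg_iso (ball k (seq n)) (ball k g)"
    using assms(4) by (auto simp: lw_converges_def)
  then show "eventually (\<lambda>n. F (seq n) = F g) sequentially"
    using assms(1-3) unfolding ball_invariant_def eventually_sequentially by (metis Suc_le_lessD)
qed

lemma lw_bcont_if_ball_invariant: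
  assumes "ball_invariant B k F" "\<And>g. in_Gstar B g \<Longrightarrow> \<bar>F g\<bar> \<le> C"
  shows "lw_bcont B F"
  using assms ball_invariant_tendsto unfolding lw_bcont_def by blast

text \<open>Each term is eventually constant along a convergent sequence; Tannery's theorem
  interchanges limit and sum.\<close>
lemma lw_bcont_discounted_sum:
  assumes "0 \<le> \<gamma>" "\<gamma> < 1" and inv: "\<And>t. ball_invariant B (k t) (F t)"
    and bound: "\<And>t g. in_Gstar B g \<Longrightarrow> \<bar>F t g\<bar> \<le> C"
  shows "lw_bcont B (\<lambda>g. \<Sum>t. \<gamma> ^ t * F t g)"
  unfolding lw_bcont_def
proof (intro conjI allI impI)
  have "\<bar>\<Sum>t. \<gamma> ^ t * F t g\<bar> \<le> C / (1 - \<gamma>)" if "in_Gstar B g" for g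
    using abs_suminf_discounted_le[OF assms(1,2) bound[OF that]] .
  then show "\<exists>C. \<forall>g. in_Gstar B g \<longrightarrow> \<bar>\<Sum>t. \<gamma> ^ t * F t g\<bar> \<le> C"
    by blast
  fix seq g assume seq: "\<forall>n. in_Gstar B (seq n)" and g: "in_Gstar B g" and conv: "lw_converges seq g"
  have terms: "(\<lambda>n. \<gamma> ^ t * F t (seq n)) \<longlonglongrightarrow> \<gamma> ^ t * F t g" for t
    using ball_invariant_tendsto[OF inv] seq g conv by (intro tendsto_mult_left) blast
  have dominated: "eventually (\<lambda>(t, n). norm (\<gamma> ^ t * F t (seq n)) \<le> C * \<gamma> ^ t) (at_top \<times>\<^sub>F sequentially)"
  proof (intro always_eventually allI, clarify)
    fix t n
    show "norm (\<gamma> ^ t * F t (seq n)) \<le> C * \<gamma> ^ t"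
      using mult_left_mono[OF bound, of "seq n" "\<gamma> ^ t" t] seq \<open>0 \<le> \<gamma>\<close> by (simp add: abs_mult mult.commute)
  qed
  have "summable (\<lambda>t. C * \<gamma> ^ t)"
    using assms(1,2) by (intro summable_mult summable_geometric) simp
  from tannerys_theorem[OF terms dominated this trivial_limit_sequentially]
  show "(\<lambda>n. \<Sum>t. \<gamma> ^ t * F t (seq n)) \<longlonglongrightarrow> (\<Sum>t. \<gamma> ^ t * F t g)"
    by blast
qed

lemma integral_eq_if_lw_avg_eq:
  assumes conv: "lw_conv_prob B Gn M" and f: "lw_bcont B f"
    and avg: "\<And>n g. g \<in> set_pmf (Gn n) \<Longrightarrow> lw_avg f g = c"
  shows "integral\<^sup>L M f = c"
proof (rule ccontr)
  assume "integral\<^sup>L M f \<noteq> c"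
  define \<epsilon> where "\<epsilon> = \<bar>c - integral\<^sup>L M f\<bar> / 2"
  have "\<epsilon> > 0" using \<open>integral\<^sup>L M f \<noteq> c\<close> by (simp add: \<epsilon>_def)
  then have "(\<lambda>n. measure_pmf.prob (Gn n) {g. \<epsilon> < \<bar>lw_avg f g - integral\<^sup>L M f\<bar>}) \<longlonglongrightarrow> 0"
    using conv f unfolding lw_conv_prob_def by blast
  moreover have "measure_pmf.prob (Gn n) {g. \<epsilon> < \<bar>lw_avg f g - integral\<^sup>L M f\<bar>} = 1" for n
    using avg \<open>\<epsilon> > 0\<close> by (subst measure_pmf.prob_eq_1) (auto intro!: AE_pmfI simp: \<epsilon>_def)
  ultimately show False
    using LIMSEQ_unique by fastforce
qed

lemma expectation_lw_avg_tendsto_integral: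
  assumes "lw_conv_prob B Gn M" "lw_bcont B f" "\<And>n g. g \<in> set_pmf (Gn n) \<Longrightarrow> \<bar>lw_avg f g\<bar> \<le> K"
  shows "(\<lambda>n. measure_pmf.expectation (Gn n) (lw_avg f)) \<longlonglongrightarrow> integral\<^sup>L M f"
  using assms unfolding lw_conv_prob_def by (intro expectation_tendsto_if_tendsto_in_prob) blast+

lemma abs_lw_avg_le:
  assumes "\<And>i. i \<in> verts (fst g) \<Longrightarrow> \<bar>f (component g i)\<bar> \<le> K" and "0 \<le> K"
  shows "\<bar>lw_avg f g\<bar> \<le> K"
proof (cases "card (verts (fst g)) = 0")
  case False
  have "\<bar>\<Sum>i\<in>verts (fst g). f (component g i)\<bar> \<le> real (card (verts (fst g))) * K"
    using assms(1) by (intro sum_abs[THEN order_trans] sum_bounded_above) auto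
  then show ?thesis using False by (simp add: lw_avg_def divide_le_eq mult.commute)
qed (simp add: lw_avg_def assms(2))


lemma ballset_induced_comp_set: "ballset (induced G (comp_set G i)) k i = ballset G k i"
proof (induction k)
  case (Suc k)
  have "ballset G k i \<subseteq> comp_set G i" by (auto simp: comp_set_def)
  then show ?case
    using Suc by (auto simp: ballset.simps(2)) (blast intro: comp_set_adj_closed)
qed simp

lemma component_in_Gstar:
  assumes wf: "wf_graph (fst g)" and fin: "\<And>i. i \<in> verts (fst g) \<Longrightarrow> finite (nbrs (fst g) i)"
    and "marks_ok B g" and i: "i \<in> verts (fst g)"
  shows "in_Gstar B (component g i)"
  unfolding in_Gstar_def component_def fst_conv snd_conv
proof (intro conjI ballI)
  let ?C = "comp_set (fst g) i"
  have "?C \<subseteq> verts (fst g)"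
    using ballset_subset_verts[OF wf i] by (auto simp: comp_set_def)
  then show "verts (induced (fst g) ?C) = comp_set (induced (fst g) ?C) i"
    unfolding comp_set_def[of "induced (fst g) ?C"] ballset_induced_comp_set by (auto simp: comp_set_def)
  show "wf_graph (induced (fst g) ?C)" using wf by (auto simp: wf_graph_def)
  show "i \<in> verts (induced (fst g) ?C)" using i root_in_comp_set by simp
  show "finite (nbrs (induced (fst g) ?C) v)" for v
    using finite_nbrs[OF wf fin, of v] by (rule finite_subset[rotated]) (auto simp: nbrs_def)
  show "marks_ok B (induced (fst g) ?C, snd g)" using \<open>marks_ok B g\<close> by (auto simp: marks_ok_def)
qed

definition root_degree :: "rgraph \<Rightarrow> nat" where
  "root_degree g = card (nbrs (fst (fst g)) (snd g))"

lemma root_degree_component: "root_degree (component g i) = card (nbrs (fst g) i)"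
  by (simp add: root_degree_def component_def nbrs_induced_comp_set root_in_comp_set)

lemma root_degree_ball_invariant:
  assumes "in_Gstar B g" "in_Gstar B h" "rg_iso (ball (Suc k) g) (ball (Suc k) h)"
  shows "root_degree g = root_degree h"
  using card_nbrs_ball_invariant[of "fst (fst g)" "fst (fst h)" "snd g" "snd h" k "snd (fst g)" "snd (fst h)"]
    assms in_GstarD[OF assms(1)] in_GstarD[OF assms(2)]
  by (simp add: root_degree_def)

lemma AE_root_degree_le:
  assumes "prob_space M" and space: "space M = Gstar B" and sets: "sets M = lw_sets B"
    and conv: "lw_conv_prob B Gn M" and deg: "\<And>n g. g \<in> set_pmf (Gn n) \<Longrightarrow> max_deg_le d (fst g)"
  shows "AE g in M. root_degree g \<le> d"
proof -
  interpret prob_space M by fact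
  define h where "h g = (if root_degree g \<le> d then 0 else 1 :: real)" for g
  have "ball_invariant B 1 h"
    using root_degree_ball_invariant[of B _ _ 0] by (auto simp: ball_invariant_def h_def)
  then have "lw_bcont B h" "h \<in> borel_measurable M"
    by (auto intro!: lw_bcont_if_ball_invariant[where C=1] ball_invariant_measurable[OF _ space sets] simp: h_def)
  moreover have "lw_avg h g = 0" if "g \<in> set_pmf (Gn n)" for n g
    using deg[OF that] by (simp add: lw_avg_def h_def root_degree_component max_deg_le_def)
  ultimately have "integral\<^sup>L M h = 0" using integral_eq_if_lw_avg_eq[OF conv] by blast
  moreover have "integrable M h"
    using \<open>h \<in> borel_measurable M\<close> by (intro integrable_const_bound[where B=1]) (auto simp: h_def)
  moreover have "AE g in M. 0 \<le> h g" by (simp add: h_def)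
  ultimately have "AE g in M. h g = 0"
    using integral_nonneg_eq_0_iff_AE by blast
  then show ?thesis by eventually_elim (simp add: h_def split: if_splits)
qed

context
  fixes B d :: nat and al dt :: real and lam :: "'s::countable \<Rightarrow> real" and P :: "'s \<Rightarrow> 's pmf"
    and l0 :: "'s pmf" and pol :: "nat \<Rightarrow> nat \<Rightarrow> real"
begin

definition root_exp_drops :: "nat \<Rightarrow> rgraph \<Rightarrow> real" where
  "root_exp_drops t g = exp_drops B al dt lam P l0 pol (fst g) (snd g) t"

text \<open>The cap makes the cost bounded on all of \<open>G\<^sub>*\<close>, whose degrees are unbounded; it is
  harmless since the limit has root degree at most \<open>d\<close> almost surely.\<close>
definition capped_root_drops :: "nat \<Rightarrow> rgraph \<Rightarrow> real" where
  "capped_root_drops t g = (if root_degree g \<le> d then root_exp_drops t g else 0)"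

lemma root_exp_drops_ball_invariant: "ball_invariant B (Suc (Suc t)) (root_exp_drops t)"
  unfolding ball_invariant_def
proof (intro allI impI)
  fix g h assume g: "in_Gstar B g" and h: "in_Gstar B h"
    and iso: "rg_iso (ball (Suc (Suc t)) g) (ball (Suc (Suc t)) h)"
  have "rg_iso (ball (Suc (Suc t)) ((fst (fst g), snd (fst g)), snd g)) (ball (Suc (Suc t)) ((fst (fst h), snd (fst h)), snd h))"
    using iso by simp
  from exp_drops_ball_invariant[where lam=lam, OF _ _ _ _ _ _ this] show "root_exp_drops t g = root_exp_drops t h"
    using in_GstarD[OF g] in_GstarD[OF h] by (simp add: root_exp_drops_def)
qed

lemma capped_root_drops_ball_invariant: "ball_invariant B (Suc (Suc t)) (capped_root_drops t)"
  using root_exp_drops_ball_invariant[of t] root_degree_ball_invariant[of B _ _ "Suc t"]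
  unfolding ball_invariant_def capped_root_drops_def by metis

lemma abs_capped_root_drops_le:
  assumes "0 \<le> al" "0 \<le> dt" "\<And>s. 0 \<le> lam s" "\<And>s. lam s \<le> L" and g: "in_Gstar B g"
  shows "\<bar>capped_root_drops t g\<bar> \<le> drops_bound B (L * (1 + real d)) al dt"
proof -
  have "0 \<le> L" using assms(3,4) order_trans by blast
  have "\<bar>root_exp_drops t g\<bar> \<le> drops_bound B (L * (1 + real (root_degree g))) al dt"
    unfolding root_exp_drops_def root_degree_def
    using in_GstarD[OF g] assms(1-4) by (intro abs_exp_drops_le) auto
  also have "\<dots> \<le> drops_bound B (L * (1 + real d)) al dt" if "root_degree g \<le> d"
    using that \<open>0 \<le> L\<close> assms(1,2) by (intro drops_bound_mono mult_left_mono) auto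
  finally show ?thesis
    using \<open>0 \<le> L\<close> assms(1,2) drops_bound_nonneg by (simp add: capped_root_drops_def)
qed

lemma capped_root_drops_component:
  assumes "wf_graph (fst g)" "max_deg_le d (fst g)" "i \<in> verts (fst g)"
  shows "capped_root_drops t (component g i) = exp_drops B al dt lam P l0 pol g i t"
proof -
  have "exp_drops B al dt lam P l0 pol (induced (fst g) (comp_set (fst g) i), snd g) i t =
      exp_drops B al dt lam P l0 pol (fst g, snd g) i t"
    using assms by (intro exp_drops_component) (auto simp: max_deg_le_def)
  then show ?thesis
    using assms(2,3) by (simp add: capped_root_drops_def root_exp_drops_def root_degree_component max_deg_le_def)
      (simp add: component_def)
qed

lemma suminf_discounted_average_eq_lw_avg:
  assumes "0 \<le> \<gamma>" "\<gamma> < 1" "0 \<le> al" "0 \<le> dt" "\<And>s. 0 \<le> lam s" "\<And>s. lam s \<le> L"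
    and g: "finite (verts (fst g))" "wf_graph (fst g)" "max_deg_le d (fst g)" "marks_ok B g"
  shows "(\<Sum>t. \<gamma> ^ t * ((\<Sum>i\<in>verts (fst g). exp_drops B al dt lam P l0 pol g i t) / real (card (verts (fst g))))) =
    lw_avg (\<lambda>h. \<Sum>t. \<gamma> ^ t * capped_root_drops t h) g"
proof -
  let ?V = "verts (fst g)" and ?E = "\<lambda>i t. \<gamma> ^ t * exp_drops B al dt lam P l0 pol g i t"
  have fin: "\<And>i. i \<in> ?V \<Longrightarrow> finite (nbrs (fst g) i)" using g(3) by (simp add: max_deg_le_def)
  have component: "capped_root_drops t (component g i) = exp_drops B al dt lam P l0 pol g i t" if "i \<in> ?V" for i t
    using capped_root_drops_component g that by blast
  have "summable (?E i)" if "i \<in> ?V" for i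
    using abs_capped_root_drops_le[OF assms(3-6) component_in_Gstar[OF g(2) fin g(4) that]]
    by (intro summable_discounted[OF assms(1,2)]) (simp add: component[OF that])
  then have "(\<Sum>t. \<gamma> ^ t * ((\<Sum>i\<in>?V. exp_drops B al dt lam P l0 pol g i t) / real (card ?V))) =
      (\<Sum>i\<in>?V. \<Sum>t. ?E i t) / real (card ?V)"
    by (simp add: sum_distrib_left suminf_divide summable_sum suminf_sum[symmetric])
  also have "\<dots> = lw_avg (\<lambda>h. \<Sum>t. \<gamma> ^ t * capped_root_drops t h) g"
    by (simp add: lw_avg_def component)
  finally show ?thesis .
qed

lemma J_fin_eq_expectation_lw_avg:
  assumes "0 \<le> \<gamma>" "\<gamma> < 1" "0 \<le> al" "0 \<le> dt" "\<And>s. 0 \<le> lam s" "\<And>s. lam s \<le> L"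
    and "\<And>g. g \<in> set_pmf M \<Longrightarrow>
      finite (verts (fst g)) \<and> wf_graph (fst g) \<and> max_deg_le d (fst g) \<and> marks_ok B g"
  shows "J_fin B al dt \<gamma> lam P l0 pol M =
    - measure_pmf.expectation M (lw_avg (\<lambda>h. \<Sum>t. \<gamma> ^ t * capped_root_drops t h))"
  unfolding J_fin_def
proof (intro arg_cong[where f=uminus] integral_cong_AE AE_pmfI)
  fix g assume "g \<in> set_pmf M"
  with assms(7) show "(\<Sum>t. \<gamma> ^ t * ((\<Sum>i\<in>verts (fst g). exp_drops B al dt lam P l0 pol g i t) / real (card (verts (fst g))))) =
      lw_avg (\<lambda>h. \<Sum>t. \<gamma> ^ t * capped_root_drops t h) g"
    by (intro suminf_discounted_average_eq_lw_avg[OF assms(1-6)]) auto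
qed simp_all

lemma J_lim_eq_integral:
  assumes "AE g in M. root_degree g \<le> d" and space: "space M = Gstar B" and sets: "sets M = lw_sets B"
  shows "J_lim B al dt \<gamma> lam P l0 pol M = - integral\<^sup>L M (\<lambda>g. \<Sum>t. \<gamma> ^ t * capped_root_drops t g)"
proof -
  have "(\<lambda>g. \<Sum>t. \<gamma> ^ t * root_exp_drops t g) \<in> borel_measurable M"
    "(\<lambda>g. \<Sum>t. \<gamma> ^ t * capped_root_drops t g) \<in> borel_measurable M"
    using ball_invariant_measurable[OF root_exp_drops_ball_invariant space sets]
      ball_invariant_measurable[OF capped_root_drops_ball_invariant space sets]
    by simp_all
  then have "integral\<^sup>L M (\<lambda>g. \<Sum>t. \<gamma> ^ t * root_exp_drops t g) =
      integral\<^sup>L M (\<lambda>g. \<Sum>t. \<gamma> ^ t * capped_root_drops t g)"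
    using assms(1) by (intro integral_cong_AE) (auto elim!: eventually_mono simp: capped_root_drops_def)
  then show ?thesis by (simp add: J_lim_def root_exp_drops_def)
qed

end

theorem theorem2p1:
  fixes d B :: nat and \<alpha> \<Delta>t \<gamma> :: real
    and lam :: "'s::finite \<Rightarrow> real" and P :: "'s \<Rightarrow> 's pmf" and l0 :: "'s pmf"
    and pol :: "nat \<Rightarrow> nat \<Rightarrow> real"
    and Gn :: "nat \<Rightarrow> mgraph pmf" and Glim :: "rgraph measure"
  assumes "\<alpha> > 0" and "\<Delta>t > 0" and "0 < \<gamma>" and "\<gamma> < 1"
    and "\<And>s. lam s > 0"
    and "\<And>t x. x \<le> B \<Longrightarrow> 0 \<le> pol t x \<and> pol t x \<le> 1"
    and "\<And>n g. g \<in> set_pmf (Gn n) \<Longrightarrow>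
           finite (verts (fst g)) \<and> verts (fst g) \<noteq> {} \<and> wf_graph (fst g) \<and>
           max_deg_le d (fst g) \<and> no_isolated (fst g) \<and> marks_ok B g"
    and "prob_space Glim" and "space Glim = Gstar B" and "sets Glim = lw_sets B"
    and "lw_conv_prob B Gn Glim"
  shows "(\<lambda>n. J_fin B \<alpha> \<Delta>t \<gamma> lam P l0 pol (Gn n)) \<longlonglongrightarrow> J_lim B \<alpha> \<Delta>t \<gamma> lam P l0 pol Glim"
proof -
  note nonneg = less_imp_le[OF assms(1)] less_imp_le[OF assms(2)] less_imp_le[OF assms(3)]
    less_imp_le[OF assms(5)]
  define L where "L = Max (range lam)"
  have lam_le: "lam s \<le> L" for s unfolding L_def by (intro Max_ge) auto
  have "0 \<le> L" using nonneg(4) lam_le order_trans by blast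
  define C where "C = drops_bound B (L * (1 + real d)) \<alpha> \<Delta>t"
  let ?f = "\<lambda>g. \<Sum>t. \<gamma> ^ t * capped_root_drops B d \<alpha> \<Delta>t lam P l0 pol t g"
  have bound: "\<bar>capped_root_drops B d \<alpha> \<Delta>t lam P l0 pol t g\<bar> \<le> C" if "in_Gstar B g" for t g
    unfolding C_def using nonneg lam_le that by (intro abs_capped_root_drops_le) auto
  have "J_lim B \<alpha> \<Delta>t \<gamma> lam P l0 pol Glim = - integral\<^sup>L Glim ?f"
    using assms(7-11) by (intro J_lim_eq_integral AE_root_degree_le) auto
  moreover have "J_fin B \<alpha> \<Delta>t \<gamma> lam P l0 pol (Gn n) = - measure_pmf.expectation (Gn n) (lw_avg ?f)" for n
    using nonneg lam_le assms(4,7) by (intro J_fin_eq_expectation_lw_avg) auto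
  moreover have "(\<lambda>n. measure_pmf.expectation (Gn n) (lw_avg ?f)) \<longlonglongrightarrow> integral\<^sup>L Glim ?f"
  proof (rule expectation_lw_avg_tendsto_integral[OF assms(11)])
    show "lw_bcont B ?f"
      by (rule lw_bcont_discounted_sum[OF nonneg(3) assms(4) capped_root_drops_ball_invariant bound])
    show "\<bar>lw_avg ?f g\<bar> \<le> C / (1 - \<gamma>)" if "g \<in> set_pmf (Gn n)" for n g
      using assms(4) assms(7)[OF that] nonneg \<open>0 \<le> L\<close>
      by (intro abs_lw_avg_le abs_suminf_discounted_le bound component_in_Gstar)
         (auto simp: max_deg_le_def C_def intro!: divide_nonneg_pos drops_bound_nonneg)
  qed
  ultimately show ?thesis by (simp add: tendsto_minus)
qed

end
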